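(* Let $A,D\in\mathbb{B}(\mathcal{H})$ and $T=\begin{bmatrix}A&0\\0&D\end{bmatrix}\in\mathbb{B}(\mathcal{H}\oplus\mathcal{H})$. Let $f,g$ be non-negative continuous functions on $[0,\infty)$ with $f(t)g(t)=t$ for all $t\ge0$. Let $p,q>1$ with $\frac1p+\frac1q=1$ and let $r>0$ satisfy $r\min(p,q)\ge2$. Then for every non-negative, nondecreasing, convex function $h$ on $[0,\infty)$, \[ h\big(w^r(T)\big)\le\max\left(\left\|\tfrac1p h\big(f^{pr}(|A|)\big)+\tfrac1q h\big(g^{qr}(|A^*|)\big)\right\|,\ \left\|\tfrac1p h\big(f^{pr}(|D|)\big)+\tfrac1q h\big(g^{qr}(|D^*|)\big)\right\|\right). \]
   Context: $\mathcal{H}$ is a complex Hilbert space; $w(X)=\sup\{|\langle Xx,x\rangle|:\|x\|=1\}$ is the numerical radius; $|X|=(X^*X)^{1/2}$; $f^{s}(|X|)$ denotes $(f(|X|))^s$, and all functions of positive operators are defined by continuous functional calculus; $\|\cdot\|$ is the operator norm. *)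

theory Defs
  imports "HOL-Analysis.Analysis" "HOL-Computational_Algebra.Polynomial"
begin

text \<open>A complex Hilbert space is a
  type of class complex_inner that is also a complete_space.\<close>

class complex_inner = real_normed_vector +
  fixes scaleC :: "complex \<Rightarrow> 'a \<Rightarrow> 'a"
    and cinner :: "'a \<Rightarrow> 'a \<Rightarrow> complex"
  assumes scaleC_add_right: "scaleC c (x + y) = scaleC c x + scaleC c y"
    and scaleC_add_left: "scaleC (b + c) x = scaleC b x + scaleC c x"
    and scaleC_scaleC: "scaleC b (scaleC c x) = scaleC (b * c) x"
    and scaleC_one: "scaleC 1 x = x"
    and scaleR_scaleC: "scaleR r x = scaleC (complex_of_real r) x"
    and cinner_commute: "cinner x y = cnj (cinner y x)"
    and cinner_add_right: "cinner x (y + z) = cinner x y + cinner x z"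
    and cinner_scaleC_right: "cinner x (scaleC c y) = c * cinner x y"
    and cinner_self_real: "Im (cinner x x) = 0"
    and cinner_self_nonneg: "0 \<le> Re (cinner x x)"
    and norm_eq_sqrt_cinner: "norm x = sqrt (Re (cinner x x))"

instantiation complex :: complex_inner
begin
definition scaleC_complex :: "complex \<Rightarrow> complex \<Rightarrow> complex" where
  "scaleC_complex c z = c * z"
definition cinner_complex :: "complex \<Rightarrow> complex \<Rightarrow> complex" where
  "cinner_complex z w = cnj z * w"
instance
proof
  fix x y z b c :: complex and r :: real
  show "scaleC c (x + y) = scaleC c x + scaleC c y" by (simp add: scaleC_complex_def algebra_simps)
  show "scaleC (b + c) x = scaleC b x + scaleC c x" by (simp add: scaleC_complex_def algebra_simps)
  show "scaleC b (scaleC c x) = scaleC (b * c) x" by (simp add: scaleC_complex_def algebra_simps)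
  show "scaleC 1 x = x" by (simp add: scaleC_complex_def)
  show "r *\<^sub>R x = scaleC (complex_of_real r) x" by (simp add: scaleC_complex_def scaleR_conv_of_real)
  show "cinner x y = cnj (cinner y x)" by (simp add: cinner_complex_def mult.commute)
  show "cinner x (y + z) = cinner x y + cinner x z" by (simp add: cinner_complex_def algebra_simps)
  show "cinner x (scaleC c y) = c * cinner x y" by (simp add: cinner_complex_def scaleC_complex_def algebra_simps)
  show "Im (cinner x x) = 0" by (simp add: cinner_complex_def)
  show "0 \<le> Re (cinner x x)" by (simp add: cinner_complex_def)
  show "norm x = sqrt (Re (cinner x x))"
    by (simp add: cinner_complex_def cmod_def power2_eq_square)
qed
end

text \<open>The Hilbert direct sum H \<oplus> H, realised on the product type (whose norm in
  HOL-Analysis is already sqrt (norm a ^ 2 + norm b ^ 2)).\<close>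
instantiation prod :: (complex_inner, complex_inner) complex_inner
begin
definition scaleC_prod :: "complex \<Rightarrow> 'a \<times> 'b \<Rightarrow> 'a \<times> 'b" where
  "scaleC_prod c x = (scaleC c (fst x), scaleC c (snd x))"
definition cinner_prod :: "'a \<times> 'b \<Rightarrow> 'a \<times> 'b \<Rightarrow> complex" where
  "cinner_prod x y = cinner (fst x) (fst y) + cinner (snd x) (snd y)"
instance
proof
  fix x y z :: "'a \<times> 'b" and b c :: complex and r :: real
  show "scaleC c (x + y) = scaleC c x + scaleC c y"
    by (simp add: scaleC_prod_def scaleC_add_right)
  show "scaleC (b + c) x = scaleC b x + scaleC c x"
    by (simp add: scaleC_prod_def scaleC_add_left)
  show "scaleC b (scaleC c x) = scaleC (b * c) x"
    by (simp add: scaleC_prod_def scaleC_scaleC)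
  show "scaleC 1 x = x" by (simp add: scaleC_prod_def scaleC_one)
  show "r *\<^sub>R x = scaleC (complex_of_real r) x"
    by (simp add: scaleC_prod_def scaleR_scaleC scaleR_prod_def)
  show "cinner x y = cnj (cinner y x)"
    by (simp add: cinner_prod_def cinner_commute[of "fst x"] cinner_commute[of "snd x"])
  show "cinner x (y + z) = cinner x y + cinner x z"
    by (simp add: cinner_prod_def cinner_add_right)
  show "cinner x (scaleC c y) = c * cinner x y"
    by (simp add: cinner_prod_def scaleC_prod_def cinner_scaleC_right algebra_simps)
  show "Im (cinner x x) = 0" by (simp add: cinner_prod_def cinner_self_real)
  show "0 \<le> Re (cinner x x)" by (simp add: cinner_prod_def cinner_self_nonneg add_nonneg_nonneg)
  show "norm x = sqrt (Re (cinner x x))"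
    using cinner_self_nonneg[of "fst x"] cinner_self_nonneg[of "snd x"]
    by (simp add: norm_prod_def cinner_prod_def norm_eq_sqrt_cinner)
qed
end

definition bounded_clinear :: "('a::complex_inner \<Rightarrow> 'b::complex_inner) \<Rightarrow> bool" where
  "bounded_clinear X \<longleftrightarrow> bounded_linear X \<and> (\<forall>c x. X (scaleC c x) = scaleC c (X x))"

definition adj :: "('a::complex_inner \<Rightarrow> 'a) \<Rightarrow> ('a \<Rightarrow> 'a)" where
  "adj X = (THE Y. \<forall>x y. cinner (X x) y = cinner x (Y y))"

definition numerical_radius :: "('a::complex_inner \<Rightarrow> 'a) \<Rightarrow> real" where
  "numerical_radius X = Sup {cmod (cinner (X x) x) | x. norm x = 1}"

definition poly_op :: "real poly \<Rightarrow> ('a::complex_inner \<Rightarrow> 'a) \<Rightarrow> ('a \<Rightarrow> 'a)" where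
  "poly_op p P = (\<lambda>x. \<Sum>i\<le>degree p. coeff p i *\<^sub>R (P ^^ i) x)"

text \<open>Continuous functional calculus for a positive operator P: f(P) is the operator-norm
  limit of p_n(P) for any sequence of real polynomials p_n converging uniformly to f on
  [0, ||P||] (which contains the spectrum of P).\<close>
definition cfc :: "(real \<Rightarrow> real) \<Rightarrow> ('a::complex_inner \<Rightarrow> 'a) \<Rightarrow> ('a \<Rightarrow> 'a)" where
  "cfc f P = (THE X. bounded_linear X \<and>
     (\<forall>ps :: nat \<Rightarrow> real poly.
        (\<forall>e>0. \<exists>N. \<forall>n\<ge>N. \<forall>t\<in>{0..onorm P}. \<bar>poly (ps n) t - f t\<bar> < e) \<longrightarrow>
        (\<lambda>n. onorm (\<lambda>x. poly_op (ps n) P x - X x)) \<longlonglongrightarrow> 0))"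

definition absop :: "('a::complex_inner \<Rightarrow> 'a) \<Rightarrow> ('a \<Rightarrow> 'a)" where
  "absop X = cfc sqrt (adj X \<circ> X)"

text \<open>f^s(|X|) = (f(|X|))^s.\<close>
definition fpow_abs :: "(real \<Rightarrow> real) \<Rightarrow> real \<Rightarrow> ('a::complex_inner \<Rightarrow> 'a) \<Rightarrow> ('a \<Rightarrow> 'a)" where
  "fpow_abs f s X = cfc (\<lambda>t. t powr s) (cfc f (absop X))"

definition diag_op :: "('a::complex_inner \<Rightarrow> 'a) \<Rightarrow> ('a \<Rightarrow> 'a) \<Rightarrow> ('a \<times> 'a \<Rightarrow> 'a \<times> 'a)" where
  "diag_op A D = (\<lambda>(x, y). (A x, D y))"

end

theory Submission
  imports Defs
begin

text \<open>For a unit vector x the mixed Schwarz inequality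
  |\<langle>Ax,x\<rangle>|^2 \<le> \<langle>f^2(|A|)x,x\<rangle> \<langle>g^2(|A*|)x,x\<rangle>, Young's inequality with exponents p, q,
  the convexity and monotonicity of h and Jensen's operator inequality for the convex nondecreasing
  functions t \<mapsto> h(t^(pr/2)) and t \<mapsto> h(t^(qr/2)) (this is where r min(p,q) \<ge> 2 enters) give
  h(|\<langle>Ax,x\<rangle>|^r) \<le> \<langle>(h(f^(pr)(|A|))/p + h(g^(qr)(|A*|))/q) x, x\<rangle>.
  Taking the supremum over x and using w(T) = max(w(A), w(D)) yields the theorem.

  The continuous functional calculus is characterised by uniform polynomial approximation on
  [0, \<parallel>P\<parallel>].  It is well defined and monotone because u(P) is positive whenever the polynomial u
  is nonnegative on [0, \<parallel>P\<parallel>]: after rescaling P to a contraction Q, the Bernstein polynomials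
  of u are nonnegative combinations of the positive operators Q^k (1 - Q)^m, and their coefficients
  converge to those of u.  Adjoints come from the Riesz representation theorem, proved via closest
  points in closed convex sets.\<close>

lemma cinner_zero_right [simp]: "cinner x (0::'a::complex_inner) = 0"
  using cinner_add_right[of x "0::'a" 0] by simp

lemma cinner_zero_left [simp]: "cinner (0::'a::complex_inner) x = 0"
  by (subst cinner_commute) simp

lemma cinner_add_left: "cinner (x + y) (z::'a::complex_inner) = cinner x z + cinner y z"
  by (subst (1 2 3) cinner_commute) (simp add: cinner_add_right)

lemma cinner_scaleC_left: "cinner (scaleC c x) (y::'a::complex_inner) = cnj c * cinner x y"
  by (subst (1 2) cinner_commute) (simp add: cinner_scaleC_right)

lemma cinner_scaleR_right: "cinner x (r *\<^sub>R (y::'a::complex_inner)) = of_real r * cinner x y"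
  by (simp add: scaleR_scaleC cinner_scaleC_right)

lemma cinner_scaleR_left: "cinner (r *\<^sub>R x) (y::'a::complex_inner) = of_real r * cinner x y"
  by (simp add: scaleR_scaleC cinner_scaleC_left)

lemma cinner_minus_right: "cinner x (- (y::'a::complex_inner)) = - cinner x y"
  using cinner_scaleR_right[of x "-1" y] by simp

lemma cinner_minus_left: "cinner (- x) (y::'a::complex_inner) = - cinner x y"
  using cinner_scaleR_left[of "-1" x y] by simp

lemma cinner_diff_right: "cinner x (y - (z::'a::complex_inner)) = cinner x y - cinner x z"
  using cinner_add_right[of x y "-z"] by (simp add: cinner_minus_right)

lemma cinner_diff_left: "cinner (x - y) (z::'a::complex_inner) = cinner x z - cinner y z"
  using cinner_add_left[of x "-y" z] by (simp add: cinner_minus_left)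

lemmas cinner_simps = cinner_add_left cinner_add_right cinner_diff_left cinner_diff_right
  cinner_scaleR_left cinner_scaleR_right cinner_scaleC_left cinner_scaleC_right
  cinner_minus_left cinner_minus_right

lemma cinner_self: "cinner x (x::'a::complex_inner) = of_real ((norm x)\<^sup>2)"
proof -
  have "(norm x)\<^sup>2 = Re (cinner x x)"
    using norm_eq_sqrt_cinner[of x] cinner_self_nonneg[of x] by simp
  then show ?thesis using cinner_self_real[of x] by (simp add: complex_eq_iff)
qed

lemma Re_cinner_self: "Re (cinner x (x::'a::complex_inner)) = (norm x)\<^sup>2"
  by (simp add: cinner_self)

lemma cinner_self_eq_0 [simp]: "cinner x x = 0 \<longleftrightarrow> x = (0::'a::complex_inner)"
  by (simp add: cinner_self)

lemma cinner_cnj_commute: "cnj (cinner x (y::'a::complex_inner)) = cinner y x"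
  by (subst cinner_commute) simp

lemma Re_cinner_commute: "Re (cinner y x) = Re (cinner x (y::'a::complex_inner))"
  by (subst cinner_commute) simp

lemma cinner_ext:
  assumes "\<And>z. cinner z x = cinner z (y::'a::complex_inner)"
  shows "x = y"
proof -
  have "cinner (x - y) (x - y) = 0" using assms[of "x - y"] by (simp add: cinner_diff_right)
  then show ?thesis by (simp add: cinner_self)
qed

lemma Cauchy_Schwarz_cinner: "cmod (cinner x (y::'a::complex_inner)) \<le> norm x * norm y"
proof (cases "y = 0")
  case True then show ?thesis by simp
next
  case False
  define t where "t = cinner y x / cinner y y"
  have ny: "cinner y y = of_real ((norm y)\<^sup>2)" by (rule cinner_self)
  have npos: "norm y > 0" using False by simp
  have "cinner (x - scaleC t y) (x - scaleC t y) =
      cinner x x - t * cinner x y - cnj t * cinner y x + cnj t * t * cinner y y"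
    by (simp add: cinner_simps algebra_simps)
  also have "\<dots> = cinner x x - cinner y x * cnj (cinner y x) / cinner y y"
  proof -
    have c0: "cinner y y \<noteq> 0" using False by simp
    have cc: "cnj (cinner y y) = cinner y y" by (simp add: ny)
    have ct: "cnj t = cinner x y / cinner y y" unfolding t_def using cc
      by (simp add: cinner_cnj_commute)
    show ?thesis unfolding ct using c0 unfolding t_def cinner_cnj_commute
      by (simp add: field_simps)
  qed
  finally have e: "cinner (x - scaleC t y) (x - scaleC t y) =
      of_real ((norm x)\<^sup>2 - (cmod (cinner y x))\<^sup>2 / (norm y)\<^sup>2)"
    by (simp add: cinner_self complex_norm_square[symmetric] ny)
  have "0 \<le> (norm x)\<^sup>2 - (cmod (cinner y x))\<^sup>2 / (norm y)\<^sup>2"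
    using cinner_self_nonneg[of "x - scaleC t y"] unfolding e by simp
  then have "(cmod (cinner y x))\<^sup>2 \<le> (norm x * norm y)\<^sup>2"
    using npos by (simp add: field_simps power_mult_distrib)
  then have "cmod (cinner y x) \<le> norm x * norm y"
    by (rule power2_le_imp_le) simp
  then show ?thesis by (metis cinner_commute complex_mod_cnj)
qed

lemma Re_cinner_le: "Re (cinner x (y::'a::complex_inner)) \<le> norm x * norm y"
  using Cauchy_Schwarz_cinner[of x y] complex_Re_le_cmod order_trans by blast

lemma norm_add_square_cinner:
  "(norm (a + b))\<^sup>2 = (norm a)\<^sup>2 + (norm b)\<^sup>2 + 2 * Re (cinner a (b::'a::complex_inner))"
  unfolding Re_cinner_self[symmetric] by (simp add: cinner_simps Re_cinner_commute[of a b])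

lemma norm_diff_square_cinner:
  "(norm (a - b))\<^sup>2 = (norm a)\<^sup>2 + (norm b)\<^sup>2 - 2 * Re (cinner a (b::'a::complex_inner))"
  unfolding Re_cinner_self[symmetric] by (simp add: cinner_simps Re_cinner_commute[of a b])

lemma scaleC_zero_right [simp]: "scaleC c (0::'a::complex_inner) = 0"
  using scaleC_add_right[of c "0::'a" 0] by simp

lemma scaleC_scaleR_commute: "scaleC c (r *\<^sub>R (x::'a::complex_inner)) = r *\<^sub>R scaleC c x"
  by (simp add: scaleR_scaleC scaleC_scaleC mult.commute)

lemma scaleC_diff_right: "scaleC c (x - (y::'a::complex_inner)) = scaleC c x - scaleC c y"
  using scaleC_add_right[of c x "-y"] scaleC_scaleR_commute[of c "-1" y] by simp

lemma norm_scaleC: "norm (scaleC c (x::'a::complex_inner)) = cmod c * norm x"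
proof -
  have "(norm (scaleC c x))\<^sup>2 = (cmod c * norm x)\<^sup>2"
    unfolding Re_cinner_self[symmetric] cinner_scaleC_left cinner_scaleC_right
    by (simp add: cinner_self power_mult_distrib complex_norm_square mult.assoc[symmetric])
       (simp add: cmod_power2 power2_eq_square[symmetric])
  then show ?thesis by (simp add: power2_eq_iff_nonneg)
qed

lemma tendsto_cinner_left:
  assumes "(f \<longlongrightarrow> a) F"
  shows "((\<lambda>n. cinner (f n) (y::'a::complex_inner)) \<longlongrightarrow> cinner a y) F"
proof -
  have "((\<lambda>n. cinner (f n - a) y) \<longlongrightarrow> 0) F"
    by (rule tendsto_0_le[OF LIM_zero[OF assms], where K="norm y"])
       (simp add: Cauchy_Schwarz_cinner)
  then show ?thesis by (simp add: cinner_diff_left LIM_zero_cancel)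
qed

lemma tendsto_cinner_right:
  assumes "(f \<longlongrightarrow> a) F"
  shows "((\<lambda>n. cinner (y::'a::complex_inner) (f n)) \<longlongrightarrow> cinner y a) F"
proof -
  have "((\<lambda>n. cinner y (f n - a)) \<longlongrightarrow> 0) F"
    by (rule tendsto_0_le[OF LIM_zero[OF assms], where K="norm y"])
       (simp add: Cauchy_Schwarz_cinner mult.commute)
  then show ?thesis by (simp add: cinner_diff_right LIM_zero_cancel)
qed

lemma tendsto_scaleC:
  assumes "(f \<longlongrightarrow> a) F"
  shows "((\<lambda>n. scaleC c (f n :: 'a::complex_inner)) \<longlongrightarrow> scaleC c a) F"
proof -
  have "((\<lambda>n. scaleC c (f n - a)) \<longlongrightarrow> 0) F"
    by (rule tendsto_0_le[OF LIM_zero[OF assms], where K="cmod c"])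
       (simp add: norm_scaleC mult.commute)
  then show ?thesis by (simp add: scaleC_diff_right LIM_zero_cancel)
qed

lemmas bounded_linear_apply_add = linear_add[OF bounded_linear.linear]
lemmas bounded_linear_apply_diff = linear_diff[OF bounded_linear.linear]
lemmas bounded_linear_apply_scaleR = linear_scale[OF bounded_linear.linear]
lemmas bounded_linear_apply_0 = linear_0[OF bounded_linear.linear]
lemmas bounded_linear_apply_sum = linear_sum[OF bounded_linear.linear]

lemma bounded_clinear_imp_bounded_linear: "bounded_clinear X \<Longrightarrow> bounded_linear X"
  by (simp add: bounded_clinear_def)

lemma bounded_clinear_scaleC: "bounded_clinear X \<Longrightarrow> X (scaleC c x) = scaleC c (X x)"
  by (simp add: bounded_clinear_def)

lemma bounded_clinear_compose:
  "bounded_clinear X \<Longrightarrow> bounded_clinear Y \<Longrightarrow> bounded_clinear (\<lambda>x. X (Y x))"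
  unfolding bounded_clinear_def using bounded_linear_compose[of X Y] by auto

lemma bounded_clinear_add:
  "bounded_clinear X \<Longrightarrow> bounded_clinear Y \<Longrightarrow> bounded_clinear (\<lambda>x. X x + Y x)"
  unfolding bounded_clinear_def using bounded_linear_add[of X Y] by (auto simp: scaleC_add_right)

lemma bounded_clinear_scaleR: "bounded_clinear X \<Longrightarrow> bounded_clinear (\<lambda>x. r *\<^sub>R X x)"
  unfolding bounded_clinear_def
  using bounded_linear_compose[OF bounded_linear_scaleR_right[of r], of X]
  by (auto simp: scaleC_scaleR_commute)

lemma bounded_clinear_ident: "bounded_clinear (\<lambda>x. x)"
  by (simp add: bounded_clinear_def)

lemma bounded_clinear_zero: "bounded_clinear (\<lambda>x. 0)"
  by (simp add: bounded_clinear_def)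

lemma bounded_clinear_norm_le: "bounded_clinear X \<Longrightarrow> norm (X x) \<le> onorm X * norm x"
  using onorm bounded_clinear_imp_bounded_linear by blast

lemma bounded_clinear_onorm_nonneg: "bounded_clinear X \<Longrightarrow> 0 \<le> onorm X"
  using onorm_pos_le bounded_clinear_imp_bounded_linear by blast

lemma cmod_cinner_op_le:
  assumes "bounded_clinear X"
  shows "cmod (cinner (X x) x) \<le> onorm X * (norm x)\<^sup>2"
proof -
  have "cmod (cinner (X x) x) \<le> norm (X x) * norm x" by (rule Cauchy_Schwarz_cinner)
  also have "\<dots> \<le> onorm X * norm x * norm x"
    by (rule mult_right_mono[OF bounded_clinear_norm_le[OF assms]]) simp
  finally show ?thesis by (simp add: power2_eq_square mult.assoc)
qed

definition selfadjoint :: "('a::complex_inner \<Rightarrow> 'a) \<Rightarrow> bool" where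
  "selfadjoint P \<longleftrightarrow> (\<forall>x y. cinner (P x) y = cinner x (P y))"

definition positive_op :: "('a::complex_inner \<Rightarrow> 'a) \<Rightarrow> bool" where
  "positive_op P \<longleftrightarrow> bounded_clinear P \<and> selfadjoint P \<and> (\<forall>x. 0 \<le> Re (cinner (P x) x))"

lemma positive_op_bounded_clinear: "positive_op P \<Longrightarrow> bounded_clinear P"
  by (simp add: positive_op_def)

lemma positive_op_bounded_linear: "positive_op P \<Longrightarrow> bounded_linear P"
  by (simp add: positive_op_def bounded_clinear_imp_bounded_linear)

lemma positive_op_selfadjoint: "positive_op P \<Longrightarrow> selfadjoint P"
  by (simp add: positive_op_def)

lemma positive_op_nonneg: "positive_op P \<Longrightarrow> 0 \<le> Re (cinner (P x) x)"
  by (simp add: positive_op_def)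

lemma positive_op_onorm_nonneg: "positive_op P \<Longrightarrow> 0 \<le> onorm P"
  by (simp add: positive_op_bounded_clinear bounded_clinear_onorm_nonneg)

lemma poly_op_upto:
  assumes "degree p < n"
  shows "poly_op p P x = (\<Sum>i<n. coeff p i *\<^sub>R (P ^^ i) x)"
proof -
  have "(\<Sum>i<n. coeff p i *\<^sub>R (P ^^ i) x) = (\<Sum>i\<in>{..degree p}. coeff p i *\<^sub>R (P ^^ i) x)"
    by (rule sum.mono_neutral_right) (use assms in \<open>auto intro: coeff_eq_0 simp: not_le\<close>)
  then show ?thesis by (simp add: poly_op_def)
qed

lemma poly_op_0 [simp]: "poly_op 0 P x = 0"
  by (simp add: poly_op_def)

lemma bounded_linear_funpow: "bounded_linear (P::'a::real_normed_vector \<Rightarrow> 'a) \<Longrightarrow> bounded_linear (P ^^ i)"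
proof (induction i)
  case 0
  have "P ^^ 0 = (\<lambda>x. x)" by (simp add: fun_eq_iff)
  then show ?case using bounded_linear_ident by metis
next
  case (Suc i)
  then show ?case using bounded_linear_compose[of P "P ^^ i"] by (simp add: o_def)
qed

lemma poly_op_pCons:
  assumes P: "bounded_linear P"
  shows "poly_op (pCons a p) P x = a *\<^sub>R x + P (poly_op p P x)"
proof -
  let ?n = "Suc (degree p)"
  have d: "degree (pCons a p) < Suc ?n" by (simp add: degree_pCons_le le_less_trans)
  have "poly_op (pCons a p) P x = (\<Sum>i<Suc ?n. coeff (pCons a p) i *\<^sub>R (P ^^ i) x)"
    by (rule poly_op_upto[OF d])
  also have "\<dots> = a *\<^sub>R x + (\<Sum>i<?n. coeff p i *\<^sub>R P ((P ^^ i) x))"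
    by (subst sum.lessThan_Suc_shift) simp
  also have "(\<Sum>i<?n. coeff p i *\<^sub>R P ((P ^^ i) x)) = P (poly_op p P x)"
    unfolding poly_op_upto[of p ?n, OF lessI] bounded_linear_apply_sum[OF P]
      bounded_linear_apply_scaleR[OF P] ..
  finally show ?thesis .
qed

lemma poly_op_const [simp]: "poly_op [:c:] P x = c *\<^sub>R x"
  by (simp add: poly_op_def)

lemma bounded_linear_poly_op: "bounded_linear P \<Longrightarrow> bounded_linear (poly_op p P)"
  unfolding poly_op_def
  by (intro bounded_linear_sum bounded_linear_compose[OF bounded_linear_scaleR_right]
      bounded_linear_funpow)

lemma poly_op_add:
  assumes P: "bounded_linear P"
  shows "poly_op (p + q) P x = poly_op p P x + poly_op q P x"
proof (induction p arbitrary: q x rule: pCons_induct)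
  case 0 then show ?case by simp
next
  case (pCons a p)
  show ?case
  proof (cases q rule: pCons_cases)
    case (pCons b q')
    show ?thesis unfolding pCons add_pCons poly_op_pCons[OF P] pCons.IH
      by (simp add: bounded_linear_apply_add[OF P] scaleR_add_left algebra_simps)
  qed
qed

lemma poly_op_smult:
  assumes P: "bounded_linear P"
  shows "poly_op (smult c p) P x = c *\<^sub>R poly_op p P x"
  by (induction p arbitrary: x rule: pCons_induct)
     (simp_all add: poly_op_pCons[OF P] bounded_linear_apply_scaleR[OF P] scaleR_add_right)

lemma poly_op_minus:
  assumes P: "bounded_linear P"
  shows "poly_op (- p) P x = - poly_op p P x"
  using poly_op_smult[OF P, of "-1" p] by simp

lemma poly_op_diff:
  assumes P: "bounded_linear P"
  shows "poly_op (p - q) P x = poly_op p P x - poly_op q P x"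
  using poly_op_add[OF P, of p "-q"] poly_op_minus[OF P] by simp

lemma poly_op_mult:
  assumes P: "bounded_linear P"
  shows "poly_op (p * q) P x = poly_op p P (poly_op q P x)"
proof (induction p arbitrary: x rule: pCons_induct)
  case 0 then show ?case by simp
next
  case (pCons a p)
  have "poly_op (pCons a p * q) P x = poly_op (smult a q + pCons 0 (p * q)) P x" by simp
  also have "\<dots> = a *\<^sub>R poly_op q P x + P (poly_op p P (poly_op q P x))"
    by (simp add: poly_op_add[OF P] poly_op_smult[OF P] poly_op_pCons[OF P] pCons.IH)
  finally show ?case by (simp add: poly_op_pCons[OF P])
qed

lemma poly_op_X [simp]: "bounded_linear P \<Longrightarrow> poly_op [:0, 1:] P x = P x"
  by (simp add: poly_op_pCons)

lemma poly_op_one [simp]: "poly_op 1 P x = x"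
  by (simp add: one_pCons)

lemma poly_op_commute:
  assumes P: "bounded_linear P"
  shows "poly_op p P (poly_op q P x) = poly_op q P (poly_op p P x)"
  by (metis P mult.commute poly_op_mult)

lemma poly_op_commute_P:
  assumes P: "bounded_linear P"
  shows "P (poly_op p P x) = poly_op p P (P x)"
  using poly_op_commute[OF P, of "[:0,1:]" p] P by simp

lemma poly_op_pcompose:
  assumes P: "bounded_linear P"
  shows "poly_op (pcompose p q) P x = poly_op p (poly_op q P) x"
proof (induction p arbitrary: x rule: pCons_induct)
  case 0 then show ?case by (simp add: poly_op_def)
next
  case (pCons a p)
  have Q: "bounded_linear (poly_op q P)" by (rule bounded_linear_poly_op[OF P])
  show ?case
    by (simp add: pcompose_pCons poly_op_add[OF P] poly_op_mult[OF P] pCons.IH poly_op_pCons[OF Q])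
qed

lemma bounded_clinear_poly_op: "bounded_clinear P \<Longrightarrow> bounded_clinear (poly_op p P)"
proof (induction p rule: pCons_induct)
  case 0
  have "poly_op 0 P = (\<lambda>x. 0)" by (simp add: fun_eq_iff)
  then show ?case using bounded_clinear_zero by metis
next
  case (pCons a p)
  have e: "poly_op (pCons a p) P = (\<lambda>x. a *\<^sub>R x + P (poly_op p P x))"
    using poly_op_pCons[OF bounded_clinear_imp_bounded_linear[OF pCons.prems]] by blast
  show ?case unfolding e
    by (rule bounded_clinear_add[OF bounded_clinear_scaleR[OF bounded_clinear_ident]
          bounded_clinear_compose[OF pCons.prems pCons.IH[OF pCons.prems]]])
qed

lemma selfadjoint_poly_op:
  assumes P: "bounded_clinear P" "selfadjoint P"
  shows "selfadjoint (poly_op p P)"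
proof (induction p rule: pCons_induct)
  case 0 then show ?case by (simp add: selfadjoint_def)
next
  case (pCons a p)
  have e: "poly_op (pCons a p) P = (\<lambda>x. a *\<^sub>R x + P (poly_op p P x))"
    using poly_op_pCons[OF bounded_clinear_imp_bounded_linear[OF P(1)]] by blast
  have "cinner (P (poly_op p P x)) y = cinner x (P (poly_op p P y))" for x y
  proof -
    have "cinner (P (poly_op p P x)) y = cinner (poly_op p P x) (P y)"
      using P(2) unfolding selfadjoint_def by blast
    also have "\<dots> = cinner x (poly_op p P (P y))"
      using pCons.IH unfolding selfadjoint_def by blast
    also have "\<dots> = cinner x (P (poly_op p P y))"
      by (simp add: poly_op_commute_P[OF bounded_clinear_imp_bounded_linear[OF P(1)]])
    finally show ?thesis .
  qed
  note h = this
  show ?case unfolding selfadjoint_def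
  proof (intro allI)
    fix x y
    show "cinner (poly_op (pCons a p) P x) y = cinner x (poly_op (pCons a p) P y)"
      unfolding e cinner_add_left cinner_add_right cinner_scaleR_left cinner_scaleR_right h ..
  qed
qed

section \<open>Bernstein polynomials\<close>

definition bernstein_poly :: "nat \<Rightarrow> nat \<Rightarrow> real poly" where
  "bernstein_poly N k = smult (of_nat (N choose k)) ([:0,1:] ^ k * [:1,-1:] ^ (N - k))"

text \<open>The Bernstein approximation of t^j.  The recursion in bernstein_monomial_Suc shows that
  its coefficients tend to those of t^j as N \<rightarrow> \<infinity>.\<close>

definition bernstein_monomial :: "nat \<Rightarrow> nat \<Rightarrow> real poly" where
  "bernstein_monomial N j = (\<Sum>k\<le>N. smult ((real k / real N) ^ j) (bernstein_poly N k))"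

lemma pderiv_sum: "pderiv (\<Sum>i\<in>I. f i) = (\<Sum>i\<in>I. pderiv (f i :: real poly))"
  by (induction I rule: infinite_finite_induct) (simp_all add: pderiv_add)

lemma smult_sum_right: "smult a (\<Sum>i\<in>I. f i) = (\<Sum>i\<in>I. smult a (f i :: real poly))"
  by (induction I rule: infinite_finite_induct) (simp_all add: smult_add_right)

lemma smult_of_nat_poly: "smult (of_nat m) q = (of_nat m :: real poly) * q"
  by (simp add: of_nat_poly)

lemma pow_pred_mult: "(of_nat k :: 'a::comm_semiring_1) * p ^ (k - 1) * p = of_nat k * p ^ k"
  by (cases k) (simp_all add: ac_simps)

lemma pderiv_bernstein_basis:
  fixes k m :: nat
  shows "[:0,1,-1:] * pderiv ([:0,1:] ^ k * [:1,-1:] ^ m :: real poly) =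
     smult (of_nat k) ([:0,1:] ^ k * [:1,-1:] ^ m)
     - smult (of_nat (k + m)) ([:0,1:] * ([:0,1:] ^ k * [:1,-1:] ^ m))"
proof -
  define X where "X = ([:0,1:] :: real poly)"
  define Y where "Y = ([:1,-1:] :: real poly)"
  have XY: "[:0,1,-1:] = X * Y" by (simp add: X_def Y_def)
  have Y1: "Y = 1 - X" by (simp add: X_def Y_def one_pCons)
  have dX: "pderiv X = 1" by (simp add: pderiv_pCons X_def)
  have dY: "pderiv Y = -1" by (simp add: pderiv_pCons Y_def one_pCons)
  have D: "pderiv (X ^ k * Y ^ m) = - (X ^ k * (of_nat m * Y ^ (m - 1)))
      + of_nat k * X ^ (k - 1) * Y ^ m"
    by (simp add: pderiv_mult pderiv_power dX dY smult_of_nat_poly)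
  have "X * Y * pderiv (X ^ k * Y ^ m) =
     - (X * X ^ k * (of_nat m * Y ^ (m - 1) * Y)) + (of_nat k * X ^ (k - 1) * X) * Y ^ m * Y"
    unfolding D by (simp add: algebra_simps)
  also have "\<dots> = - (of_nat m * (X * (X ^ k * Y ^ m))) + of_nat k * (X ^ k * Y ^ m * Y)"
    unfolding pow_pred_mult by (simp add: algebra_simps)
  also have "X ^ k * Y ^ m * Y = X ^ k * Y ^ m - X * (X ^ k * Y ^ m)"
    unfolding Y1 by (simp add: algebra_simps)
  finally have "X * Y * pderiv (X ^ k * Y ^ m) =
      of_nat k * (X ^ k * Y ^ m) - of_nat (k + m) * (X * (X ^ k * Y ^ m))"
    by (simp add: algebra_simps)
  then show ?thesis unfolding XY[symmetric] X_def Y_def smult_of_nat_poly by simp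
qed

lemma bernstein_monomial_0: "bernstein_monomial N 0 = 1"
proof -
  have "bernstein_monomial N 0 = (\<Sum>k\<le>N. of_nat (N choose k) * [:0,1:] ^ k * [:1,-1:] ^ (N - k))"
    unfolding bernstein_monomial_def bernstein_poly_def by (simp add: of_nat_poly mult.assoc)
  also have "\<dots> = ([:0,1:] + [:1,-1:]) ^ N" by (rule binomial_ring[symmetric])
  also have "[:0,1:] + [:1,-1:] = (1 :: real poly)" by (simp add: one_pCons)
  finally show ?thesis by simp
qed

lemma bernstein_monomial_Suc:
  assumes N: "N > 0"
  shows "bernstein_monomial N (Suc j) =
    [:0,1:] * bernstein_monomial N j + smult (1 / real N) ([:0,1,-1:] * pderiv (bernstein_monomial N j))"
proof -
  let ?X = "[:0,1:] :: real poly" and ?Y = "[:1,-1:] :: real poly"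
  let ?b = "\<lambda>k. ?X ^ k * ?Y ^ (N - k)"
  have bpb: "bernstein_poly N k = smult (of_nat (N choose k)) (?b k)" for k
    by (simp add: bernstein_poly_def)
  have d: "[:0,1,-1:] * pderiv (bernstein_poly N k) = smult (of_nat (N choose k))
       (smult (of_nat k) (?b k) - smult (of_nat N) (?X * ?b k))" if "k \<le> N" for k
    using pderiv_bernstein_basis[of k "N - k"] that by (simp add: bpb pderiv_smult mult_smult_right)
  have "[:0,1,-1:] * pderiv (bernstein_monomial N j) = (\<Sum>k\<le>N. smult ((real k / real N) ^ j)
      ([:0,1,-1:] * pderiv (bernstein_poly N k)))"
    by (simp add: bernstein_monomial_def pderiv_sum pderiv_smult sum_distrib_left mult_smult_right)
  also have "\<dots> = (\<Sum>k\<le>N. smult (real N * (real k / real N) ^ Suc j) (bernstein_poly N k)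
      - smult (real N * (real k / real N) ^ j) (?X * bernstein_poly N k))"
  proof (rule sum.cong[OF refl])
    fix k assume "k \<in> {..N}"
    then have kN: "k \<le> N" by simp
    have sc: "real N * (real k / real N) ^ Suc j = (real k / real N)^j * real k"
      using N by (simp add: field_simps)
    show "smult ((real k / real N) ^ j) ([:0,1,-1:] * pderiv (bernstein_poly N k)) =
      smult (real N * (real k / real N) ^ Suc j) (bernstein_poly N k)
      - smult (real N * (real k / real N) ^ j) (?X * bernstein_poly N k)"
      unfolding d[OF kN] sc unfolding bpb mult_smult_right smult_diff_right smult_smult
      by (simp add: ac_simps)
  qed
  also have "\<dots> = smult (real N) (bernstein_monomial N (Suc j))
      - smult (real N) (?X * bernstein_monomial N j)"
    by (simp add: bernstein_monomial_def sum_subtractf smult_sum_right smult_sum mult_smult_right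
        sum_distrib_left
         smult_smult del: power_Suc)
  finally have "[:0,1,-1:] * pderiv (bernstein_monomial N j)
      = smult (real N) (bernstein_monomial N (Suc j) - ?X * bernstein_monomial N j)"
    by (simp add: smult_diff_right)
  then have "smult (1 / real N) ([:0,1,-1:] * pderiv (bernstein_monomial N j))
      = bernstein_monomial N (Suc j) - ?X * bernstein_monomial N j"
    using N by simp
  then show ?thesis by simp
qed

lemma degree_bernstein_monomial: "N > 0 \<Longrightarrow> degree (bernstein_monomial N j) \<le> j"
proof (induction j)
  case 0 then show ?case by (simp add: bernstein_monomial_0)
next
  case (Suc j)
  let ?F = "bernstein_monomial N j"
  have a: "degree ([:0,1:] * ?F) \<le> Suc j"
    using degree_mult_le[of "[:0,1:]" ?F] Suc by simp
  have b: "degree ([:0,1,-1:] * pderiv ?F) \<le> Suc j"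
  proof (cases "degree ?F = 0")
    case True then have "pderiv ?F = 0" by (simp add: pderiv_eq_0_iff)
    then show ?thesis by simp
  next
    case False
    have "degree ([:0,1,-1:] * pderiv ?F) \<le> degree [:0,1,-1::real:] + degree (pderiv ?F)"
      by (rule degree_mult_le)
    also have "\<dots> \<le> 2 + (j - 1)" using Suc by (simp add: degree_pderiv)
    finally show ?thesis using False Suc by simp
  qed
  show ?case unfolding bernstein_monomial_Suc[OF Suc.prems]
    by (rule degree_add_le[OF a order.trans[OF degree_smult_le b]])
qed

lemma convergent_coeff_mult_XY:
  assumes "\<And>n. convergent (\<lambda>N. coeff (G N) n :: real)"
  shows "convergent (\<lambda>N. coeff ([:0,1,-1:] * G N) i)"
proof (cases i)
  case 0 then show ?thesis by (simp add: convergent_const)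
next
  case (Suc i')
  show ?thesis
  proof (cases i')
    case 0 then show ?thesis using Suc assms by simp
  next
    case (Suc n)
    then show ?thesis using \<open>i = Suc i'\<close> assms by (simp add: convergent_diff)
  qed
qed

lemma bernstein_monomial_coeff_limit:
  "(\<lambda>N. coeff (bernstein_monomial N j) i) \<longlonglongrightarrow> (if i = j then 1 else 0)"
proof (induction j arbitrary: i)
  case 0 then show ?case by (simp add: bernstein_monomial_0)
next
  case (Suc j)
  define D where "D N = [:0,1,-1:] * pderiv (bernstein_monomial N j)" for N
  have "convergent (\<lambda>N. coeff (bernstein_monomial N j) n)" for n
    using Suc.IH convergent_def by blast
  then have "convergent (\<lambda>N. coeff (pderiv (bernstein_monomial N j)) n)" for n
    unfolding coeff_pderiv by (intro convergent_mult_const_iff[THEN iffD2]) simp_all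
  then have "convergent (\<lambda>N. coeff (D N) i)"
    unfolding D_def by (rule convergent_coeff_mult_XY)
  then obtain L where "(\<lambda>N. coeff (D N) i) \<longlonglongrightarrow> L" by (auto simp: convergent_def)
  then have z: "(\<lambda>N. 1 / real N * coeff (D N) i) \<longlonglongrightarrow> 0"
    using tendsto_mult[OF lim_inverse_n'] by fastforce
  have x: "(\<lambda>N. coeff ([:0,1:] * bernstein_monomial N j) i) \<longlonglongrightarrow> (if i = Suc j then 1 else 0)"
    using Suc.IH by (cases i) simp_all
  have "(\<lambda>N. coeff ([:0,1:] * bernstein_monomial N j) i + 1 / real N * coeff (D N) i)
      \<longlonglongrightarrow> (if i = Suc j then 1 else 0)"
    using tendsto_add[OF x z] by simp
  moreover have "\<forall>\<^sub>F N in sequentially.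
      coeff ([:0,1:] * bernstein_monomial N j) i + 1 / real N * coeff (D N) i
      = coeff (bernstein_monomial N (Suc j)) i"
    using eventually_gt_at_top[of 0]
    by eventually_elim (simp only: D_def bernstein_monomial_Suc coeff_add coeff_smult)
  ultimately show ?case by (rule Lim_transform_eventually)
qed

definition bernstein_approx :: "nat \<Rightarrow> real poly \<Rightarrow> real poly" where
  "bernstein_approx N u = (\<Sum>k\<le>N. smult (poly u (real k / real N)) (bernstein_poly N k))"

lemma bernstein_approx_eq:
  "bernstein_approx N u = (\<Sum>j\<le>degree u. smult (coeff u j) (bernstein_monomial N j))"
proof -
  have "bernstein_approx N u =
      (\<Sum>k\<le>N. \<Sum>j\<le>degree u. smult (coeff u j * (real k / real N) ^ j) (bernstein_poly N k))"
    unfolding bernstein_approx_def poly_altdef smult_sum ..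
  also have "\<dots> = (\<Sum>j\<le>degree u. \<Sum>k\<le>N. smult (coeff u j * (real k / real N) ^ j) (bernstein_poly N k))"
    by (rule sum.swap)
  also have "\<dots> = (\<Sum>j\<le>degree u. smult (coeff u j) (bernstein_monomial N j))"
    unfolding bernstein_monomial_def smult_sum_right by simp
  finally show ?thesis .
qed

lemma bernstein_approx_coeff_limit: "(\<lambda>N. coeff (bernstein_approx N u - u) i) \<longlonglongrightarrow> 0"
proof -
  have "(\<lambda>N. \<Sum>j\<le>degree u. coeff u j * coeff (bernstein_monomial N j) i) \<longlonglongrightarrow>
      (\<Sum>j\<le>degree u. coeff u j * (if i = j then 1 else 0))"
    by (intro tendsto_sum tendsto_mult tendsto_const bernstein_monomial_coeff_limit)
  also have "(\<Sum>j\<le>degree u. coeff u j * (if i = j then 1 else 0)) = coeff u i"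
  proof -
    have "(\<Sum>j\<le>degree u. coeff u j * (if i = j then 1 else 0))
        = (\<Sum>j\<le>degree u. if i = j then coeff u j else 0)"
      by (rule sum.cong) auto
    then show ?thesis by (cases "i \<le> degree u") (auto simp: coeff_eq_0)
  qed
  finally have "(\<lambda>N. coeff (bernstein_approx N u) i) \<longlonglongrightarrow> coeff u i"
    by (simp add: bernstein_approx_eq coeff_sum)
  from tendsto_diff[OF this tendsto_const[of "coeff u i"]] show ?thesis by simp
qed

lemma degree_bernstein_approx_diff: "N > 0 \<Longrightarrow> degree (bernstein_approx N u - u) \<le> degree u"
proof -
  assume N: "N > 0"
  have "degree (bernstein_approx N u) \<le> degree u"
    unfolding bernstein_approx_eq
  proof (rule degree_sum_le)
    fix j assume "j \<in> {..degree u}"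
    then show "degree (smult (coeff u j) (bernstein_monomial N j)) \<le> degree u"
      using degree_bernstein_monomial[OF N, of j] degree_smult_le[of "coeff u j" "bernstein_monomial N j"]
      by simp
  qed simp
  then show ?thesis using degree_diff_le by blast
qed

section \<open>Positivity of polynomials of a positive contraction\<close>

definition poly_op_nonneg :: "('a::complex_inner \<Rightarrow> 'a) \<Rightarrow> real poly \<Rightarrow> bool" where
  "poly_op_nonneg Q p \<longleftrightarrow> (\<forall>x. 0 \<le> Re (cinner (poly_op p Q x) x))"

lemma poly_op_nonneg_add:
  assumes Q: "bounded_linear Q" and "poly_op_nonneg Q p" "poly_op_nonneg Q q"
  shows "poly_op_nonneg Q (p + q)"
  using assms unfolding poly_op_nonneg_def by (simp add: poly_op_add[OF Q] cinner_add_left)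

lemma poly_op_nonneg_smult:
  assumes Q: "bounded_linear Q" and "poly_op_nonneg Q p" "0 \<le> c"
  shows "poly_op_nonneg Q (smult c p)"
  using assms unfolding poly_op_nonneg_def by (simp add: poly_op_smult[OF Q] cinner_scaleR_left)

lemma poly_op_nonneg_0: "poly_op_nonneg Q 0" by (simp add: poly_op_nonneg_def)

lemma poly_op_nonneg_sum:
  assumes Q: "bounded_linear Q" and "\<And>i. i \<in> I \<Longrightarrow> poly_op_nonneg Q (f i)"
  shows "poly_op_nonneg Q (\<Sum>i\<in>I. f i)"
  using assms(2)
  by (induction I rule: infinite_finite_induct)
     (auto simp: poly_op_nonneg_0 intro!: poly_op_nonneg_add[OF Q])

lemma poly_op_nonneg_square_mult:
  assumes Q: "bounded_clinear Q" "selfadjoint Q" and r: "poly_op_nonneg Q r"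
  shows "poly_op_nonneg Q (w * w * r)"
  unfolding poly_op_nonneg_def
proof
  fix x
  have Ql: "bounded_linear Q" using Q(1) by (rule bounded_clinear_imp_bounded_linear)
  have sw: "selfadjoint (poly_op w Q)" by (rule selfadjoint_poly_op[OF Q])
  have "cinner (poly_op (w * w * r) Q x) x = cinner (poly_op w Q (poly_op r Q (poly_op w Q x))) x"
    by (simp add: poly_op_mult[OF Ql] poly_op_commute[OF Ql, of r w])
  also have "\<dots> = cinner (poly_op r Q (poly_op w Q x)) (poly_op w Q x)"
    using sw unfolding selfadjoint_def by blast
  finally show "0 \<le> Re (cinner (poly_op (w * w * r) Q x) x)"
    using r unfolding poly_op_nonneg_def by simp
qed

lemma poly_op_nonneg_1: "poly_op_nonneg Q 1" by (simp add: poly_op_nonneg_def Re_cinner_self)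

lemma poly_op_nonneg_X: "positive_op Q \<Longrightarrow> poly_op_nonneg Q [:0,1:]"
  by (simp add: poly_op_nonneg_def positive_op_nonneg positive_op_bounded_linear)

lemma poly_op_nonneg_one_minus_X:
  assumes Q: "positive_op Q" and n: "\<And>x. norm (Q x) \<le> norm x"
  shows "poly_op_nonneg Q [:1,-1:]"
  unfolding poly_op_nonneg_def
proof
  fix x
  have Ql: "bounded_linear Q" by (rule positive_op_bounded_linear[OF Q])
  have e: "[:1,-1:] = 1 - [:0,1::real:]" by (simp add: one_pCons)
  have "Re (cinner (Q x) x) \<le> norm (Q x) * norm x" by (rule Re_cinner_le)
  also have "\<dots> \<le> norm x * norm x" by (rule mult_right_mono[OF n]) simp
  finally show "0 \<le> Re (cinner (poly_op [:1, -1:] Q x) x)"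
    unfolding e poly_op_diff[OF Ql] by (simp add: cinner_diff_left Re_cinner_self power2_eq_square Ql)
qed

lemma poly_op_nonneg_X_one_minus_X:
  assumes Q: "positive_op Q" and n: "\<And>x. norm (Q x) \<le> norm x"
  shows "poly_op_nonneg Q ([:0,1:] * [:1,-1:])"
proof -
  have Ql: "bounded_linear Q" by (rule positive_op_bounded_linear[OF Q])
  have e: "[:0,1:] * [:1,-1:] = [:0,1:] * [:0,1:] * [:1,-1::real:] + [:1,-1:] * [:1,-1:] * [:0,1:]"
    by simp
  show ?thesis unfolding e
    by (intro poly_op_nonneg_add[OF Ql] poly_op_nonneg_square_mult[OF positive_op_bounded_clinear[OF Q]
          positive_op_selfadjoint[OF Q]] poly_op_nonneg_X poly_op_nonneg_one_minus_X Q n)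
qed

lemma poly_op_nonneg_bernstein_basis:
  assumes Q: "positive_op Q" and n: "\<And>x. norm (Q x) \<le> norm x"
  shows "poly_op_nonneg Q ([:0,1:] ^ k * [:1,-1:] ^ m)"
proof (induction "k + m" arbitrary: k m rule: less_induct)
  case less
  let ?X = "[:0,1::real:]" and ?Y = "[:1,-1::real:]"
  note sw = poly_op_nonneg_square_mult[OF positive_op_bounded_clinear[OF Q] positive_op_selfadjoint[OF Q]]
  show ?case
  proof (cases "k \<ge> 2")
    case True
    then obtain k' where k: "k = Suc (Suc k')" by (metis add_2_eq_Suc le_Suc_ex)
    have "?X ^ k * ?Y ^ m = ?X * ?X * (?X ^ k' * ?Y ^ m)" by (simp only: k power_Suc mult_ac)
    moreover have "poly_op_nonneg Q (?X ^ k' * ?Y ^ m)" using less[of k' m] k by simp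
    ultimately show ?thesis using sw by metis
  next
    case k2: False
    show ?thesis
    proof (cases "m \<ge> 2")
      case True
      then obtain m' where m: "m = Suc (Suc m')" by (metis add_2_eq_Suc le_Suc_ex)
      have "?X ^ k * ?Y ^ m = ?Y * ?Y * (?X ^ k * ?Y ^ m')" by (simp only: m power_Suc mult_ac)
      moreover have "poly_op_nonneg Q (?X ^ k * ?Y ^ m')" using less[of k m'] m by simp
      ultimately show ?thesis using sw by metis
    next
      case False
      then have "k = 0 \<or> k = 1" "m = 0 \<or> m = 1" using k2 by auto
      then show ?thesis
        using poly_op_nonneg_1 poly_op_nonneg_X[OF Q] poly_op_nonneg_one_minus_X[OF Q n]
          poly_op_nonneg_X_one_minus_X[OF Q n] by auto
    qed
  qed
qed

lemma poly_op_nonneg_bernstein_approx: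
  assumes Q: "positive_op Q" and n: "\<And>x. norm (Q x) \<le> norm x"
    and u: "\<And>t. 0 \<le> t \<Longrightarrow> t \<le> 1 \<Longrightarrow> 0 \<le> poly u t"
  shows "poly_op_nonneg Q (bernstein_approx N u)"
proof -
  have Ql: "bounded_linear Q" by (rule positive_op_bounded_linear[OF Q])
  show ?thesis unfolding bernstein_approx_def
  proof (rule poly_op_nonneg_sum[OF Ql])
    fix k assume k: "k \<in> {..N}"
    have "0 \<le> poly u (real k / real N)"
      using k by (intro u) (auto simp: divide_le_eq_1)
    then show "poly_op_nonneg Q (smult (poly u (real k / real N)) (bernstein_poly N k))"
      unfolding bernstein_poly_def
      by (intro poly_op_nonneg_smult[OF Ql] poly_op_nonneg_bernstein_basis[OF Q n]) auto
  qed
qed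

lemma norm_funpow_contraction_le:
  fixes Q :: "'a::real_normed_vector \<Rightarrow> 'a"
  assumes n: "\<And>x. norm (Q x) \<le> norm x"
  shows "norm ((Q ^^ i) x) \<le> norm x"
proof (induction i)
  case 0 then show ?case by simp
next
  case (Suc i)
  have "norm ((Q ^^ Suc i) x) = norm (Q ((Q ^^ i) x))" by simp
  also have "\<dots> \<le> norm ((Q ^^ i) x)" by (rule n)
  finally show ?case using Suc by simp
qed

lemma norm_poly_op_le_coeff_sum:
  assumes Ql: "bounded_linear Q" and n: "\<And>x. norm (Q x) \<le> norm x" and d: "degree p \<le> d"
  shows "norm (poly_op p Q x) \<le> (\<Sum>i<Suc d. \<bar>coeff p i\<bar>) * norm x"
proof -
  have "norm (poly_op p Q x) = norm (\<Sum>i<Suc d. coeff p i *\<^sub>R (Q ^^ i) x)"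
    using d by (subst poly_op_upto[of p "Suc d"]) auto
  also have "\<dots> \<le> (\<Sum>i<Suc d. norm (coeff p i *\<^sub>R (Q ^^ i) x))" by (rule norm_sum)
  also have "\<dots> \<le> (\<Sum>i<Suc d. \<bar>coeff p i\<bar> * norm x)"
    by (rule sum_mono) (simp add: mult_left_mono norm_funpow_contraction_le[OF n])
  finally show ?thesis by (simp only: sum_distrib_right)
qed

lemma poly_op_nonneg_contraction:
  assumes Q: "positive_op Q" and n: "\<And>x. norm (Q x) \<le> norm x"
    and u: "\<And>t. 0 \<le> t \<Longrightarrow> t \<le> 1 \<Longrightarrow> 0 \<le> poly u t"
  shows "poly_op_nonneg Q u"
  unfolding poly_op_nonneg_def
proof
  fix x
  have Ql: "bounded_linear Q" by (rule positive_op_bounded_linear[OF Q])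
  define e where "e N = (\<Sum>i<Suc (degree u). \<bar>coeff (bernstein_approx N u - u) i\<bar>)" for N
  have e0: "e \<longlonglongrightarrow> 0"
  proof -
    have "e \<longlonglongrightarrow> (\<Sum>i<Suc (degree u). \<bar>0::real\<bar>)"
      unfolding e_def by (intro tendsto_sum tendsto_rabs bernstein_approx_coeff_limit)
    then show ?thesis by simp
  qed
  have le: "- (e N * (norm x)\<^sup>2) \<le> Re (cinner (poly_op u Q x) x)" if N: "N > 0" for N
  proof -
    have nb: "norm (poly_op (bernstein_approx N u - u) Q x) \<le> e N * norm x"
      unfolding e_def by (rule norm_poly_op_le_coeff_sum[OF Ql n degree_bernstein_approx_diff[OF N]])
    have "Re (cinner (poly_op (bernstein_approx N u - u) Q x) x)
        \<le> norm (poly_op (bernstein_approx N u - u) Q x) * norm x"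
      by (rule Re_cinner_le)
    also have "\<dots> \<le> e N * norm x * norm x" by (rule mult_right_mono[OF nb]) simp
    finally have a: "Re (cinner (poly_op (bernstein_approx N u - u) Q x) x) \<le> e N * (norm x)\<^sup>2"
      by (simp add: power2_eq_square mult.assoc)
    have b: "0 \<le> Re (cinner (poly_op (bernstein_approx N u) Q x) x)"
      using poly_op_nonneg_bernstein_approx[OF Q n u] unfolding poly_op_nonneg_def by blast
    show ?thesis using a b by (simp add: poly_op_diff[OF Ql] cinner_diff_left)
  qed
  have "(\<lambda>N. - (e N * (norm x)\<^sup>2)) \<longlonglongrightarrow> - (0 * (norm x)\<^sup>2)"
    by (intro tendsto_minus tendsto_mult e0 tendsto_const)
  moreover have "\<forall>\<^sub>F N in sequentially. - (e N * (norm x)\<^sup>2) \<le> Re (cinner (poly_op u Q x) x)"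
    using eventually_gt_at_top[of 0] by eventually_elim (rule le)
  ultimately show "0 \<le> Re (cinner (poly_op u Q x) x)"
    using tendsto_le[OF trivial_limit_sequentially tendsto_const] by fastforce
qed

lemma poly_op_zero_operator:
  assumes Pl: "bounded_linear P" and z: "\<And>x. P x = 0"
  shows "poly_op u P x = poly u 0 *\<^sub>R x"
  by (induction u arbitrary: x rule: pCons_induct) (simp_all add: poly_op_pCons[OF Pl] z)

lemma positive_op_scaleR:
  assumes P: "positive_op P" and c: "0 \<le> c"
  shows "positive_op (\<lambda>x. c *\<^sub>R P x)"
  unfolding positive_op_def
proof (intro conjI allI)
  show "bounded_clinear (\<lambda>x. c *\<^sub>R P x)"
    by (rule bounded_clinear_scaleR[OF positive_op_bounded_clinear[OF P]])
  show "selfadjoint (\<lambda>x. c *\<^sub>R P x)"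
    using positive_op_selfadjoint[OF P] unfolding selfadjoint_def
    by (simp add: cinner_scaleR_left cinner_scaleR_right)
  show "0 \<le> Re (cinner (c *\<^sub>R P x) x)" for x
    using positive_op_nonneg[OF P, of x] c by (simp add: cinner_scaleR_left)
qed

lemma poly_op_nonneg_rescale:
  assumes P: "positive_op P" and M: "onorm P \<le> M" "0 < M"
    and u: "\<And>t. 0 \<le> t \<Longrightarrow> t \<le> M \<Longrightarrow> 0 \<le> poly u t"
  shows "poly_op_nonneg P u"
proof -
  have Pl: "bounded_linear P" by (rule positive_op_bounded_linear[OF P])
  define Q where "Q = (\<lambda>x. (1 / M) *\<^sub>R P x)"
  have Q: "positive_op Q" unfolding Q_def by (rule positive_op_scaleR[OF P]) (use M in simp)
  have Qc: "bounded_clinear Q" by (rule positive_op_bounded_clinear[OF Q])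
  have n: "norm (Q x) \<le> norm x" for x
  proof -
    have "norm (Q x) = norm (P x) / M" unfolding Q_def using M by simp
    also have "\<dots> \<le> onorm P * norm x / M"
      by (rule divide_right_mono[OF onorm[OF Pl]]) (use M in simp)
    also have "\<dots> \<le> M * norm x / M"
      by (rule divide_right_mono[OF mult_right_mono]) (use M in simp_all)
    finally show ?thesis using M by simp
  qed
  define v where "v = pcompose u [:0, M:]"
  have "poly_op_nonneg Q v"
    by (rule poly_op_nonneg_contraction[OF Q n]) (use M u in \<open>simp add: v_def poly_pcompose\<close>)
  moreover have "poly_op [:0, M:] Q = P"
  proof
    fix x
    have Ql: "bounded_linear Q" using Qc by (rule bounded_clinear_imp_bounded_linear)
    have "poly_op [:0, M:] Q x = Q (M *\<^sub>R x)"
      by (simp add: poly_op_pCons[OF Ql] bounded_linear_apply_0[OF Ql])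
    also have "\<dots> = P x" using M by (simp add: Q_def bounded_linear_apply_scaleR[OF Pl])
    finally show "poly_op [:0, M:] Q x = P x" .
  qed
  ultimately show ?thesis
    unfolding poly_op_nonneg_def v_def poly_op_pcompose[OF bounded_clinear_imp_bounded_linear[OF Qc]]
    by simp
qed

lemma poly_op_nonneg_if_poly_nonneg:
  assumes P: "positive_op P" and u: "\<And>t. 0 \<le> t \<Longrightarrow> t \<le> onorm P \<Longrightarrow> 0 \<le> poly u t"
  shows "poly_op_nonneg P u"
proof (cases "onorm P = 0")
  case True
  have Pl: "bounded_linear P" by (rule positive_op_bounded_linear[OF P])
  have z: "P x = 0" for x using True onorm_eq_0[OF Pl] by simp
  show ?thesis unfolding poly_op_nonneg_def poly_op_zero_operator[OF Pl z]
    using u[of 0] True by (simp add: cinner_scaleR_left Re_cinner_self)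
next
  case False
  then have "0 < onorm P"
    using bounded_clinear_onorm_nonneg[OF positive_op_bounded_clinear[OF P]] by simp
  then show ?thesis using poly_op_nonneg_rescale[OF P order.refl] u by blast
qed

lemma poly_op_norm_le:
  assumes P: "positive_op P" and u: "\<And>t. 0 \<le> t \<Longrightarrow> t \<le> onorm P \<Longrightarrow> \<bar>poly u t\<bar> \<le> c"
  shows "norm (poly_op u P x) \<le> c * norm x"
proof -
  have Pc: "bounded_clinear P" by (rule positive_op_bounded_clinear[OF P])
  have Pl: "bounded_linear P" using Pc by (rule bounded_clinear_imp_bounded_linear)
  have c0: "0 \<le> c" using u[of 0] bounded_clinear_onorm_nonneg[OF Pc] by simp
  have "poly_op_nonneg P ([:c^2:] - u * u)"
  proof (rule poly_op_nonneg_if_poly_nonneg[OF P])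
    fix t assume "0 \<le> t" "t \<le> onorm P"
    then have "\<bar>poly u t\<bar> \<le> c" by (rule u)
    then have "(poly u t)^2 \<le> c^2" by (metis abs_ge_zero power2_abs power_mono)
    then show "0 \<le> poly ([:c^2:] - u * u) t" by (simp add: power2_eq_square)
  qed
  then have "0 \<le> Re (cinner (poly_op ([:c^2:] - u * u) P x) x)" unfolding poly_op_nonneg_def by blast
  moreover have "cinner (poly_op u P (poly_op u P x)) x = cinner (poly_op u P x) (poly_op u P x)"
    using selfadjoint_poly_op[OF Pc positive_op_selfadjoint[OF P]] unfolding selfadjoint_def by metis
  ultimately have "(norm (poly_op u P x))^2 \<le> (c * norm x)^2"
    by (simp add: poly_op_diff[OF Pl] poly_op_mult[OF Pl] cinner_diff_left cinner_scaleR_left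
        Re_cinner_self power_mult_distrib)
  then show ?thesis by (rule power2_le_imp_le) (use c0 in simp)
qed

definition unif_approx :: "(real \<Rightarrow> real) \<Rightarrow> real \<Rightarrow> (nat \<Rightarrow> real poly) \<Rightarrow> bool" where
  "unif_approx f M ps \<longleftrightarrow> (\<forall>e>0. \<exists>N. \<forall>n\<ge>N. \<forall>t\<in>{0..M}. \<bar>poly (ps n) t - f t\<bar> < e)"

lemma poly_bernstein_poly: "poly (bernstein_poly n k) x = Bernstein n k x"
  by (simp add: bernstein_poly_def Bernstein_def)

lemma unif_approx_exists:
  assumes f: "continuous_on {0..M} f" and M: "0 \<le> M"
  shows "\<exists>ps. unif_approx f M ps"
proof (cases "M = 0")
  case True
  then show ?thesis by (intro exI[of _ "\<lambda>n. [:f 0:]"]) (auto simp: unif_approx_def)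
next
  case False
  with M have M: "0 < M" by simp
  define g where "g s = f (M * s)" for s
  have g: "continuous_on {0..1} g"
    unfolding g_def
    by (rule continuous_on_compose2[OF f])
       (use M in \<open>auto intro!: continuous_intros simp: mult_le_cancel_left1\<close>)
  define ps where
    "ps n = pcompose (\<Sum>k\<le>n. smult (g (real k / real n)) (bernstein_poly n k)) [:0, 1/M:]" for n
  have pp: "poly (ps n) t = (\<Sum>k\<le>n. g (real k / real n) * Bernstein n k (t / M))" for n t
    by (simp add: ps_def poly_pcompose poly_sum poly_bernstein_poly)
  show ?thesis
  proof (intro exI[of _ ps], unfold unif_approx_def, intro allI impI)
    fix e :: real assume e: "e > 0"
    obtain N where N: "\<forall>n x. N \<le> n \<and> x \<in> {0..1} \<longrightarrow>
        \<bar>g x - (\<Sum>k\<le>n. g(k/n) * Bernstein n k x)\<bar> < e"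
      using Bernstein_Weierstrass[OF g e] by blast
    show "\<exists>N. \<forall>n\<ge>N. \<forall>t\<in>{0..M}. \<bar>poly (ps n) t - f t\<bar> < e"
    proof (intro exI allI impI ballI)
      fix n t assume n: "N \<le> n" and t: "t \<in> {0..M}"
      have "t / M \<in> {0..1}" using t M by auto
      then have "\<bar>g (t/M) - (\<Sum>k\<le>n. g(k/n) * Bernstein n k (t/M))\<bar> < e" using N n by blast
      moreover have "g (t / M) = f t" using M by (simp add: g_def)
      ultimately show "\<bar>poly (ps n) t - f t\<bar> < e" by (simp add: pp abs_minus_commute)
    qed
  qed
qed

lemma unif_approx_mono:
  "unif_approx f M ps \<Longrightarrow> M' \<le> M \<Longrightarrow> unif_approx f M' ps"
  unfolding unif_approx_def by (meson atLeastAtMost_iff order_trans)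

lemma unif_approx_add:
  "unif_approx f M ps \<Longrightarrow> unif_approx g M qs \<Longrightarrow> unif_approx (\<lambda>t. f t + g t) M (\<lambda>n. ps n + qs n)"
  unfolding unif_approx_def
proof (intro allI impI)
  fix e :: real assume a: "\<forall>e>0. \<exists>N. \<forall>n\<ge>N. \<forall>t\<in>{0..M}. \<bar>poly (ps n) t - f t\<bar> < e"
     "\<forall>e>0. \<exists>N. \<forall>n\<ge>N. \<forall>t\<in>{0..M}. \<bar>poly (qs n) t - g t\<bar> < e" and e: "0 < e"
  obtain N1 where N1: "\<forall>n\<ge>N1. \<forall>t\<in>{0..M}. \<bar>poly (ps n) t - f t\<bar> < e/2" using a(1) e
    by (meson half_gt_zero)
  obtain N2 where N2: "\<forall>n\<ge>N2. \<forall>t\<in>{0..M}. \<bar>poly (qs n) t - g t\<bar> < e/2" using a(2) e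
    by (meson half_gt_zero)
  show "\<exists>N. \<forall>n\<ge>N. \<forall>t\<in>{0..M}. \<bar>poly (ps n + qs n) t - (f t + g t)\<bar> < e"
  proof (intro exI[of _ "max N1 N2"] allI impI ballI)
    fix n t assume "max N1 N2 \<le> n" "t \<in> {0..M}"
    then have "\<bar>poly (ps n) t - f t\<bar> < e/2" "\<bar>poly (qs n) t - g t\<bar> < e/2" using N1 N2 by auto
    then show "\<bar>poly (ps n + qs n) t - (f t + g t)\<bar> < e" by (simp only: poly_add)
  qed
qed

lemma unif_approx_scale:
  "unif_approx f M ps \<Longrightarrow> unif_approx (\<lambda>t. c * f t) M (\<lambda>n. smult c (ps n))"
  unfolding unif_approx_def
proof (intro allI impI)
  fix e :: real assume a: "\<forall>e>0. \<exists>N. \<forall>n\<ge>N. \<forall>t\<in>{0..M}. \<bar>poly (ps n) t - f t\<bar> < e" and e: "0 < e"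
  have e': "e / (\<bar>c\<bar> + 1) > 0" using e by (simp add: add_nonneg_pos)
  obtain N where N: "\<forall>n\<ge>N. \<forall>t\<in>{0..M}. \<bar>poly (ps n) t - f t\<bar> < e / (\<bar>c\<bar> + 1)" using a e' by blast
  show "\<exists>N. \<forall>n\<ge>N. \<forall>t\<in>{0..M}. \<bar>poly (smult c (ps n)) t - c * f t\<bar> < e"
  proof (intro exI[of _ N] allI impI ballI)
    fix n t assume "N \<le> n" "t \<in> {0..M}"
    then have h: "\<bar>poly (ps n) t - f t\<bar> < e / (\<bar>c\<bar> + 1)" using N by auto
    have "\<bar>poly (smult c (ps n)) t - c * f t\<bar> = \<bar>c\<bar> * \<bar>poly (ps n) t - f t\<bar>"
      by (simp add: abs_mult[symmetric] algebra_simps)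
    also have "\<dots> \<le> (\<bar>c\<bar> + 1) * \<bar>poly (ps n) t - f t\<bar>" by (simp add: mult_right_mono)
    also have "\<dots> < (\<bar>c\<bar> + 1) * (e / (\<bar>c\<bar> + 1))"
      by (rule mult_strict_left_mono[OF h]) (simp add: add_nonneg_pos)
    also have "\<dots> = e" by (simp add: add_nonneg_pos)
    finally show "\<bar>poly (smult c (ps n)) t - c * f t\<bar> < e" .
  qed
qed

lemma unif_approx_mult:
  assumes ps: "unif_approx f M ps" and qs: "unif_approx g M qs"
    and Bf: "\<And>t. 0 \<le> t \<Longrightarrow> t \<le> M \<Longrightarrow> \<bar>f t\<bar> \<le> Bf" and Bg: "\<And>t. 0 \<le> t \<Longrightarrow> t \<le> M \<Longrightarrow> \<bar>g t\<bar> \<le> Bg"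
  shows "unif_approx (\<lambda>t. f t * g t) M (\<lambda>n. ps n * qs n)"
  unfolding unif_approx_def
proof (intro allI impI)
  fix e :: real assume e: "0 < e"
  define d where "d = min 1 (e / (\<bar>Bf\<bar> + \<bar>Bg\<bar> + 2))"
  have pos: "0 < \<bar>Bf\<bar> + \<bar>Bg\<bar> + 2" by (smt (verit) abs_ge_zero)
  have d1: "d \<le> e / (\<bar>Bf\<bar> + \<bar>Bg\<bar> + 2)" by (simp add: d_def)
  have d: "d > 0" "d \<le> 1" "d * (\<bar>Bf\<bar> + \<bar>Bg\<bar> + 2) \<le> e"
    using e pos mult_right_mono[OF d1, of "\<bar>Bf\<bar> + \<bar>Bg\<bar> + 2"] by (auto simp: d_def)
  obtain N1 where N1: "\<forall>n\<ge>N1. \<forall>t\<in>{0..M}. \<bar>poly (ps n) t - f t\<bar> < d"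
    using ps d unfolding unif_approx_def by blast
  obtain N2 where N2: "\<forall>n\<ge>N2. \<forall>t\<in>{0..M}. \<bar>poly (qs n) t - g t\<bar> < d"
    using qs d unfolding unif_approx_def by blast
  show "\<exists>N. \<forall>n\<ge>N. \<forall>t\<in>{0..M}. \<bar>poly (ps n * qs n) t - f t * g t\<bar> < e"
  proof (intro exI[of _ "max N1 N2"] allI impI ballI)
    fix n t assume n: "max N1 N2 \<le> n" and t: "t \<in> {0..M}"
    have a: "\<bar>poly (ps n) t - f t\<bar> < d" and b: "\<bar>poly (qs n) t - g t\<bar> < d"
      using N1 N2 n t by auto
    have f: "\<bar>f t\<bar> \<le> \<bar>Bf\<bar>" and g: "\<bar>g t\<bar> \<le> \<bar>Bg\<bar>" using Bf Bg t by fastforce+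
    have pn: "\<bar>poly (ps n) t\<bar> \<le> \<bar>Bf\<bar> + 1" using a f d by linarith
    have "poly (ps n * qs n) t - f t * g t =
        poly (ps n) t * (poly (qs n) t - g t) + (poly (ps n) t - f t) * g t"
      by (simp add: algebra_simps)
    then have "\<bar>poly (ps n * qs n) t - f t * g t\<bar> \<le>
        \<bar>poly (ps n) t\<bar> * \<bar>poly (qs n) t - g t\<bar> + \<bar>poly (ps n) t - f t\<bar> * \<bar>g t\<bar>"
      by (metis abs_mult abs_triangle_ineq)
    also have "\<dots> \<le> (\<bar>Bf\<bar> + 1) * d + d * \<bar>Bg\<bar>"
      by (intro add_mono mult_mono) (use pn a b g in auto)
    also have "\<dots> < e" using d by (simp add: algebra_simps)
    finally show "\<bar>poly (ps n * qs n) t - f t * g t\<bar> < e" .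
  qed
qed

lemma unif_approx_const_poly: "unif_approx (poly q) M (\<lambda>n. q)"
  by (simp add: unif_approx_def)

lemma unif_approx_Cauchy:
  assumes "unif_approx f M ps" "unif_approx f M qs" and "d > 0"
  shows "\<exists>N. \<forall>n\<ge>N. \<forall>m\<ge>N. \<forall>t. 0 \<le> t \<longrightarrow> t \<le> M \<longrightarrow> \<bar>poly (ps n) t - poly (qs m) t\<bar> \<le> d"
proof -
  obtain N1 where N1: "\<forall>n\<ge>N1. \<forall>t\<in>{0..M}. \<bar>poly (ps n) t - f t\<bar> < d/2"
    using assms(1,3) unfolding unif_approx_def by (meson half_gt_zero)
  obtain N2 where N2: "\<forall>n\<ge>N2. \<forall>t\<in>{0..M}. \<bar>poly (qs n) t - f t\<bar> < d/2"
    using assms(2,3) unfolding unif_approx_def by (meson half_gt_zero)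
  show ?thesis
  proof (intro exI[of _ "max N1 N2"] allI impI)
    fix n m t assume "max N1 N2 \<le> n" "max N1 N2 \<le> m" "0 \<le> t" "t \<le> M"
    then have "\<bar>poly (ps n) t - f t\<bar> < d/2" "\<bar>poly (qs m) t - f t\<bar> < d/2"
      using N1 N2 by auto
    then show "\<bar>poly (ps n) t - poly (qs m) t\<bar> \<le> d" by linarith
  qed
qed

definition op_tendsto :: "(nat \<Rightarrow> 'a::real_normed_vector \<Rightarrow> 'b::real_normed_vector) \<Rightarrow> ('a \<Rightarrow> 'b) \<Rightarrow> bool"
  where "op_tendsto T X \<longleftrightarrow> (\<forall>d>0. \<exists>N. \<forall>n\<ge>N. \<forall>x. norm (T n x - X x) \<le> d * norm x)"

lemma op_tendsto_imp_tendsto: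
  assumes "op_tendsto T X"
  shows "(\<lambda>n. T n x) \<longlonglongrightarrow> X x"
proof (rule LIMSEQ_I)
  fix r :: real assume r: "0 < r"
  have "r / (norm x + 1) > 0" using r by (simp add: add_nonneg_pos)
  then obtain N where N: "\<forall>n\<ge>N. norm (T n x - X x) \<le> r / (norm x + 1) * norm x"
    using assms unfolding op_tendsto_def by blast
  have "r / (norm x + 1) * norm x < r"
    using r by (simp add: divide_less_eq add_nonneg_pos)
  then show "\<exists>N. \<forall>n\<ge>N. norm (T n x - X x) < r" using N by (meson le_less_trans)
qed

lemma op_tendsto_onorm:
  assumes T: "\<And>n. bounded_linear (T n)" and X: "bounded_linear X" and lim: "op_tendsto T X"
  shows "(\<lambda>n. onorm (\<lambda>x. T n x - X x)) \<longlonglongrightarrow> 0"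
proof (rule LIMSEQ_I)
  fix r :: real assume r: "0 < r"
  then obtain N where N: "\<forall>n\<ge>N. \<forall>x. norm (T n x - X x) \<le> r / 2 * norm x"
    using lim unfolding op_tendsto_def by (meson half_gt_zero)
  show "\<exists>N. \<forall>n\<ge>N. norm (onorm (\<lambda>x. T n x - X x) - 0) < r"
  proof (intro exI allI impI)
    fix n assume "n \<ge> N"
    then have "onorm (\<lambda>x. T n x - X x) \<le> r / 2"
      by (intro onorm_bound) (use r N in auto)
    moreover have "0 \<le> onorm (\<lambda>x. T n x - X x)"
      by (rule onorm_pos_le[OF bounded_linear_sub[OF T X]])
    ultimately show "norm (onorm (\<lambda>x. T n x - X x) - 0) < r" using r by simp
  qed
qed

lemma onorm_tendsto_imp_tendsto:
  assumes "\<And>n. bounded_linear (\<lambda>x. T n x - X x)" and "(\<lambda>n. onorm (\<lambda>x. T n x - X x)) \<longlonglongrightarrow> 0"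
  shows "(\<lambda>n. T n x) \<longlonglongrightarrow> X x"
proof -
  have "(\<lambda>n. T n x - X x) \<longlonglongrightarrow> 0"
    by (rule tendsto_0_le[OF assms(2), where K="norm x"])
       (use onorm[OF assms(1)] onorm_pos_le[OF assms(1)] in \<open>simp add: mult.commute\<close>)
  then show ?thesis by (rule LIM_zero_cancel)
qed

lemma op_tendsto_trans_Cauchy:
  assumes Cauchy: "\<And>d. d > 0 \<Longrightarrow> \<exists>N. \<forall>n\<ge>N. \<forall>m\<ge>N. \<forall>x. norm (S n x - T m x) \<le> d * norm x"
    and lim: "op_tendsto T X"
  shows "op_tendsto S X"
  unfolding op_tendsto_def
proof (intro allI impI)
  fix d :: real assume "d > 0"
  then obtain N1 N2 where N1: "\<forall>n\<ge>N1. \<forall>m\<ge>N1. \<forall>x. norm (S n x - T m x) \<le> d / 2 * norm x"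
    and N2: "\<forall>n\<ge>N2. \<forall>x. norm (T n x - X x) \<le> d / 2 * norm x"
    using Cauchy lim unfolding op_tendsto_def by (meson half_gt_zero)
  have "norm (S n x - X x) \<le> d * norm x" if "n \<ge> max N1 N2" for n x
  proof -
    let ?m = "max N1 N2"
    have "norm (S n x - X x) \<le> norm (S n x - T ?m x) + norm (T ?m x - X x)"
      using norm_triangle_ineq[of "S n x - T ?m x" "T ?m x - X x"] by simp
    also have "\<dots> \<le> d / 2 * norm x + d / 2 * norm x"
      using N1 N2 that by (intro add_mono) auto
    finally show ?thesis by simp
  qed
  then show "\<exists>N. \<forall>n\<ge>N. \<forall>x. norm (S n x - X x) \<le> d * norm x" by blast
qed

lemma bounded_linear_op_tendsto_limit:
  assumes T: "\<And>n. bounded_linear (T n)" and X: "\<And>x. (\<lambda>n. T n x) \<longlonglongrightarrow> X x"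
    and lim: "op_tendsto T X"
  shows "bounded_linear X"
proof -
  obtain N where N: "\<forall>n\<ge>N. \<forall>x. norm (T n x - X x) \<le> 1 * norm x"
    using lim unfolding op_tendsto_def by (meson zero_less_one)
  show ?thesis
  proof (rule bounded_linear_intro)
    show "X (x + y) = X x + X y" for x y
      using LIMSEQ_unique[OF X[of "x + y"]] tendsto_add[OF X[of x] X[of y]]
      by (simp add: bounded_linear_apply_add[OF T])
    show "X (r *\<^sub>R x) = r *\<^sub>R X x" for r x
      using LIMSEQ_unique[OF X[of "r *\<^sub>R x"]] tendsto_scaleR[OF tendsto_const X[of x]]
      by (simp add: bounded_linear_apply_scaleR[OF T])
    show "norm (X x) \<le> norm x * (1 + onorm (T N))" for x
    proof -
      have "norm (X x) \<le> norm (T N x - X x) + norm (T N x)"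
        using norm_triangle_ineq4[of "T N x" "T N x - X x"] by simp
      also have "\<dots> \<le> norm x + onorm (T N) * norm x"
        using N onorm[OF T] by (metis add_mono mult_1 order_refl)
      finally show ?thesis by (simp add: algebra_simps)
    qed
  qed
qed

lemma operator_Cauchy_limit:
  fixes T :: "nat \<Rightarrow> 'a::real_normed_vector \<Rightarrow> 'b::{real_normed_vector, complete_space}"
  assumes T: "\<And>n. bounded_linear (T n)"
    and Cauchy: "\<And>d. d > 0 \<Longrightarrow> \<exists>N. \<forall>n\<ge>N. \<forall>m\<ge>N. \<forall>x. norm (T n x - T m x) \<le> d * norm x"
  obtains X where "bounded_linear X" "op_tendsto T X"
proof -
  have "convergent (\<lambda>n. T n x)" for x
    unfolding Cauchy_convergent_iff[symmetric]
  proof (rule CauchyI)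
    fix e :: real assume e: "0 < e"
    then have "e / (norm x + 1) > 0" by (simp add: add_nonneg_pos)
    then obtain N where N: "\<forall>n\<ge>N. \<forall>m\<ge>N. norm (T n x - T m x) \<le> e / (norm x + 1) * norm x"
      using Cauchy by blast
    have "e / (norm x + 1) * norm x < e"
      using e by (simp add: divide_less_eq add_nonneg_pos)
    then show "\<exists>M. \<forall>m\<ge>M. \<forall>n\<ge>M. norm (T m x - T n x) < e" using N by (meson le_less_trans)
  qed
  then have X: "(\<lambda>n. T n x) \<longlonglongrightarrow> lim (\<lambda>n. T n x)" for x
    using convergent_LIMSEQ_iff by blast
  have lim: "op_tendsto T (\<lambda>x. lim (\<lambda>n. T n x))"
    unfolding op_tendsto_def
  proof (intro allI impI)
    fix d :: real assume "d > 0"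
    then obtain N where N: "\<forall>n\<ge>N. \<forall>m\<ge>N. \<forall>x. norm (T n x - T m x) \<le> d * norm x"
      using Cauchy by blast
    have "norm (T n x - lim (\<lambda>n. T n x)) \<le> d * norm x" if "n \<ge> N" for n x
    proof (rule tendsto_upperbound)
      show "(\<lambda>m. norm (T n x - T m x)) \<longlonglongrightarrow> norm (T n x - lim (\<lambda>n. T n x))"
        by (intro tendsto_intros X)
      show "\<forall>\<^sub>F m in sequentially. norm (T n x - T m x) \<le> d * norm x"
        using eventually_ge_at_top[of N] by eventually_elim (use N that in blast)
    qed simp
    then show "\<exists>N. \<forall>n\<ge>N. \<forall>x. norm (T n x - lim (\<lambda>n. T n x)) \<le> d * norm x" by blast
  qed
  show thesis by (rule that[OF bounded_linear_op_tendsto_limit[OF T X lim] lim])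
qed

section \<open>The continuous functional calculus\<close>

lemma poly_op_unif_approx_Cauchy:
  assumes P: "positive_op P" and ps: "unif_approx f (onorm P) ps" and qs: "unif_approx f (onorm P) qs"
    and d: "d > 0"
  shows "\<exists>N. \<forall>n\<ge>N. \<forall>m\<ge>N. \<forall>x. norm (poly_op (ps n) P x - poly_op (qs m) P x) \<le> d * norm x"
proof -
  obtain N where N: "\<forall>n\<ge>N. \<forall>m\<ge>N. \<forall>t. 0 \<le> t \<longrightarrow> t \<le> onorm P \<longrightarrow> \<bar>poly (ps n - qs m) t\<bar> \<le> d"
    using unif_approx_Cauchy[OF ps qs d] by auto
  have "norm (poly_op (ps n - qs m) P x) \<le> d * norm x" if "n \<ge> N" "m \<ge> N" for n m x
    by (rule poly_op_norm_le[OF P]) (use N that in blast)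
  then show ?thesis by (auto simp: poly_op_diff[OF positive_op_bounded_linear[OF P]])
qed

lemma cfc_char:
  fixes P :: "'a::{complex_inner, complete_space} \<Rightarrow> 'a"
  assumes P: "positive_op P" and f: "continuous_on {0..onorm P} f"
  shows "bounded_linear (cfc f P) \<and>
    (\<forall>ps. unif_approx f (onorm P) ps \<longrightarrow> op_tendsto (\<lambda>n. poly_op (ps n) P) (cfc f P))"
proof -
  have Pl: "bounded_linear P" by (rule positive_op_bounded_linear[OF P])
  obtain ps0 where ps0: "unif_approx f (onorm P) ps0"
    using unif_approx_exists[OF f positive_op_onorm_nonneg[OF P]] by blast
  obtain X where X: "bounded_linear X" "op_tendsto (\<lambda>n. poly_op (ps0 n) P) X"
    using operator_Cauchy_limit[of "\<lambda>n. poly_op (ps0 n) P"] poly_op_unif_approx_Cauchy[OF P ps0 ps0]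
      bounded_linear_poly_op[OF Pl] by blast
  have approx: "op_tendsto (\<lambda>n. poly_op (ps n) P) X" if "unif_approx f (onorm P) ps" for ps
    using op_tendsto_trans_Cauchy[OF poly_op_unif_approx_Cauchy[OF P that ps0] X(2)] .
  have "cfc f P = X"
    unfolding cfc_def unif_approx_def[symmetric]
  proof (rule the_equality)
    show "bounded_linear X \<and> (\<forall>ps. unif_approx f (onorm P) ps \<longrightarrow>
        (\<lambda>n. onorm (\<lambda>x. poly_op (ps n) P x - X x)) \<longlonglongrightarrow> 0)"
      using X(1) op_tendsto_onorm[OF bounded_linear_poly_op[OF Pl] X(1) approx] by blast
    fix Y assume "bounded_linear Y \<and> (\<forall>ps. unif_approx f (onorm P) ps \<longrightarrow>
        (\<lambda>n. onorm (\<lambda>x. poly_op (ps n) P x - Y x)) \<longlonglongrightarrow> 0)"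
    then have Y: "bounded_linear Y" "(\<lambda>n. onorm (\<lambda>x. poly_op (ps0 n) P x - Y x)) \<longlonglongrightarrow> 0"
      using ps0 by auto
    show "Y = X"
    proof
      fix x
      have "(\<lambda>n. poly_op (ps0 n) P x) \<longlonglongrightarrow> Y x"
        by (rule onorm_tendsto_imp_tendsto[OF bounded_linear_sub[OF bounded_linear_poly_op[OF Pl] Y(1)]
              Y(2)])
      then show "Y x = X x" using op_tendsto_imp_tendsto[OF X(2)] LIMSEQ_unique by blast
    qed
  qed
  then show ?thesis using X(1) approx by simp
qed

lemma continuous_on_Icc_abs_bounded:
  assumes "continuous_on {a..b} (f :: real \<Rightarrow> real)"
  obtains B where "B \<ge> 0" "\<And>t. a \<le> t \<Longrightarrow> t \<le> b \<Longrightarrow> \<bar>f t\<bar> \<le> B"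
proof -
  have "compact (f ` {a..b})" by (rule compact_continuous_image[OF assms compact_Icc])
  then obtain B where "B > 0" "\<forall>y\<in>f ` {a..b}. norm y \<le> B"
    using compact_imp_bounded bounded_pos by blast
  then show thesis by (intro that[of B]) auto
qed

context
  fixes P :: "'a::{complex_inner, complete_space} \<Rightarrow> 'a"
  assumes P: "positive_op P"
begin

lemma bounded_linear_cfc: "continuous_on {0..onorm P} f \<Longrightarrow> bounded_linear (cfc f P)"
  using cfc_char[OF P] by blast

lemma cfc_tendsto:
  assumes "continuous_on {0..onorm P} f" and "unif_approx f (onorm P) ps"
  shows "(\<lambda>n. poly_op (ps n) P x) \<longlonglongrightarrow> cfc f P x"
  using cfc_char[OF P assms(1)] assms(2) op_tendsto_imp_tendsto by blast

lemma unif_approx_onorm_exists: "continuous_on {0..onorm P} f \<Longrightarrow> \<exists>ps. unif_approx f (onorm P) ps"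
  using unif_approx_exists positive_op_onorm_nonneg[OF P] by blast

lemma cfc_cong:
  assumes "\<And>t. 0 \<le> t \<Longrightarrow> t \<le> onorm P \<Longrightarrow> f t = g t"
  shows "cfc f P = cfc g P"
proof -
  have "unif_approx f (onorm P) = unif_approx g (onorm P)"
    using assms unfolding unif_approx_def fun_eq_iff by auto
  then show ?thesis unfolding cfc_def unif_approx_def[symmetric] by simp
qed

lemma cfc_poly: "cfc (poly u) P x = poly_op u P x"
proof -
  have "unif_approx (poly u) (onorm P) (\<lambda>n. u)" by (simp add: unif_approx_def)
  from cfc_tendsto[OF _ this] show ?thesis by (simp add: continuous_on_poly LIMSEQ_const_iff)
qed

lemma cfc_const: "cfc (\<lambda>t. c) P x = c *\<^sub>R x"
proof -
  have "poly [:c:] = (\<lambda>t::real. c)" by (simp add: fun_eq_iff)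
  then show ?thesis using cfc_poly[of "[:c:]" x] by simp
qed

lemma cfc_add:
  assumes f: "continuous_on {0..onorm P} f" and g: "continuous_on {0..onorm P} g"
  shows "cfc (\<lambda>t. f t + g t) P x = cfc f P x + cfc g P x"
proof -
  obtain ps qs where ps: "unif_approx f (onorm P) ps" and qs: "unif_approx g (onorm P) qs"
    using unif_approx_onorm_exists[OF f] unif_approx_onorm_exists[OF g] by blast
  have fg: "continuous_on {0..onorm P} (\<lambda>t. f t + g t)" by (intro continuous_intros f g)
  have "(\<lambda>n. poly_op (ps n + qs n) P x) \<longlonglongrightarrow> cfc (\<lambda>t. f t + g t) P x"
    by (rule cfc_tendsto[OF fg unif_approx_add[OF ps qs]])
  moreover have "(\<lambda>n. poly_op (ps n + qs n) P x) \<longlonglongrightarrow> cfc f P x + cfc g P x"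
    unfolding poly_op_add[OF positive_op_bounded_linear[OF P]]
      by (intro tendsto_add cfc_tendsto f g ps qs)
  ultimately show ?thesis using LIMSEQ_unique by blast
qed

lemma cfc_scale:
  assumes f: "continuous_on {0..onorm P} f"
  shows "cfc (\<lambda>t. c * f t) P x = c *\<^sub>R cfc f P x"
proof -
  obtain ps where ps: "unif_approx f (onorm P) ps" using unif_approx_onorm_exists[OF f] by blast
  have cf: "continuous_on {0..onorm P} (\<lambda>t. c * f t)" by (intro continuous_intros f)
  have "(\<lambda>n. poly_op (smult c (ps n)) P x) \<longlonglongrightarrow> cfc (\<lambda>t. c * f t) P x"
    by (rule cfc_tendsto[OF cf unif_approx_scale[OF ps]])
  moreover have "(\<lambda>n. poly_op (smult c (ps n)) P x) \<longlonglongrightarrow> c *\<^sub>R cfc f P x"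
    unfolding poly_op_smult[OF positive_op_bounded_linear[OF P]]
      by (intro tendsto_scaleR tendsto_const cfc_tendsto f ps)
  ultimately show ?thesis using LIMSEQ_unique by blast
qed

lemma cfc_diff:
  assumes f: "continuous_on {0..onorm P} f" and g: "continuous_on {0..onorm P} g"
  shows "cfc (\<lambda>t. f t - g t) P x = cfc f P x - cfc g P x"
proof -
  have g': "continuous_on {0..onorm P} (\<lambda>t. (-1) * g t)" by (intro continuous_intros g)
  show ?thesis using cfc_add[OF f g', of x] cfc_scale[OF g, of "-1" x] by simp
qed

lemma cfc_norm_le:
  assumes f: "continuous_on {0..onorm P} f" and c: "\<And>t. 0 \<le> t \<Longrightarrow> t \<le> onorm P \<Longrightarrow> \<bar>f t\<bar> \<le> c"
  shows "norm (cfc f P x) \<le> c * norm x"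
proof -
  obtain ps where ps: "unif_approx f (onorm P) ps" using unif_approx_onorm_exists[OF f] by blast
  have "norm (cfc f P x) \<le> c * norm x + e * norm x" if e: "e > 0" for e
  proof -
    obtain N where N: "\<forall>n\<ge>N. \<forall>t\<in>{0..onorm P}. \<bar>poly (ps n) t - f t\<bar> < e"
      using ps e unfolding unif_approx_def by blast
    have "norm (poly_op (ps n) P x) \<le> (c + e) * norm x" if "n \<ge> N" for n
    proof (rule poly_op_norm_le[OF P])
      fix t assume "0 \<le> t" "t \<le> onorm P"
      then have "\<bar>poly (ps n) t - f t\<bar> < e" "\<bar>f t\<bar> \<le> c" using N that c by auto
      then show "\<bar>poly (ps n) t\<bar> \<le> c + e" by linarith
    qed
    then have "norm (cfc f P x) \<le> (c + e) * norm x"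
      using tendsto_norm[OF cfc_tendsto[OF f ps, of x]]
      by (intro tendsto_upperbound[where F=sequentially]) (auto simp: eventually_at_top_linorder)
    then show ?thesis by (simp add: algebra_simps)
  qed
  then have "norm (cfc f P x) \<le> c * norm x + e" if "e > 0" for e
  proof -
    have "e / (norm x + 1) > 0" using that by (simp add: add_nonneg_pos)
    then have "norm (cfc f P x) \<le> c * norm x + e / (norm x + 1) * norm x"
      using \<open>\<And>e. e > 0 \<Longrightarrow> _\<close> by blast
    also have "e / (norm x + 1) * norm x \<le> e"
      using that by (simp add: divide_le_eq add_nonneg_pos mult_left_mono)
    finally show ?thesis by simp
  qed
  then show ?thesis by (rule field_le_epsilon)
qed

lemma cfc_Re_nonneg:
  assumes f: "continuous_on {0..onorm P} f" and nn: "\<And>t. 0 \<le> t \<Longrightarrow> t \<le> onorm P \<Longrightarrow> 0 \<le> f t"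
  shows "0 \<le> Re (cinner (cfc f P x) x)"
proof -
  obtain ps where ps: "unif_approx f (onorm P) ps" using unif_approx_onorm_exists[OF f] by blast
  have "- (e * (norm x)\<^sup>2) \<le> Re (cinner (cfc f P x) x)" if e: "e > 0" for e
  proof -
    obtain N where N: "\<forall>n\<ge>N. \<forall>t\<in>{0..onorm P}. \<bar>poly (ps n) t - f t\<bar> < e"
      using ps e unfolding unif_approx_def by blast
    have "- (e * (norm x)\<^sup>2) \<le> Re (cinner (poly_op (ps n) P x) x)" if n: "n \<ge> N" for n
    proof -
      have "poly_op_nonneg P (ps n + [:e:])"
      proof (rule poly_op_nonneg_if_poly_nonneg[OF P])
        fix t assume "0 \<le> t" "t \<le> onorm P"
        then have "\<bar>poly (ps n) t - f t\<bar> < e" "0 \<le> f t" using N n nn by auto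
        then show "0 \<le> poly (ps n + [:e:]) t" by simp
      qed
      then have "0 \<le> Re (cinner (poly_op (ps n + [:e:]) P x) x)" unfolding poly_op_nonneg_def by blast
      then show ?thesis
        by (simp add: poly_op_add[OF positive_op_bounded_linear[OF P]] cinner_add_left
            cinner_scaleR_left Re_cinner_self)
    qed
    moreover have L: "(\<lambda>n. Re (cinner (poly_op (ps n) P x) x)) \<longlonglongrightarrow> Re (cinner (cfc f P x) x)"
      by (intro tendsto_Re tendsto_cinner_left cfc_tendsto f ps)
    ultimately show ?thesis
      by (intro tendsto_lowerbound[OF L]) (auto simp: eventually_at_top_linorder)
  qed
  then have "0 \<le> Re (cinner (cfc f P x) x) + e" if "e > 0" for e
  proof -
    have "e / ((norm x)\<^sup>2 + 1) > 0" using that by (simp add: add_nonneg_pos)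
    then have "- (e / ((norm x)\<^sup>2 + 1) * (norm x)\<^sup>2) \<le> Re (cinner (cfc f P x) x)"
      using \<open>\<And>e. e > 0 \<Longrightarrow> _\<close> by blast
    moreover have "e / ((norm x)\<^sup>2 + 1) * (norm x)\<^sup>2 \<le> e"
      using that by (simp add: divide_le_eq add_nonneg_pos mult_left_mono)
    ultimately show ?thesis by simp
  qed
  then show ?thesis using field_le_epsilon[of 0 "Re (cinner (cfc f P x) x)"] by simp
qed

lemma selfadjoint_cfc:
  assumes f: "continuous_on {0..onorm P} f"
  shows "selfadjoint (cfc f P)"
  unfolding selfadjoint_def
proof (intro allI)
  fix x y
  obtain ps where ps: "unif_approx f (onorm P) ps" using unif_approx_onorm_exists[OF f] by blast
  have sa: "cinner (poly_op (ps n) P x) y = cinner x (poly_op (ps n) P y)" for n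
    using selfadjoint_poly_op[OF positive_op_bounded_clinear[OF P] positive_op_selfadjoint[OF P]]
      unfolding selfadjoint_def by blast
  have "(\<lambda>n. cinner (poly_op (ps n) P x) y) \<longlonglongrightarrow> cinner (cfc f P x) y"
    by (rule tendsto_cinner_left[OF cfc_tendsto[OF f ps]])
  moreover have "(\<lambda>n. cinner (poly_op (ps n) P x) y) \<longlonglongrightarrow> cinner x (cfc f P y)"
    unfolding sa by (rule tendsto_cinner_right[OF cfc_tendsto[OF f ps]])
  ultimately show "cinner (cfc f P x) y = cinner x (cfc f P y)" using LIMSEQ_unique by blast
qed

lemma bounded_clinear_cfc:
  assumes f: "continuous_on {0..onorm P} f"
  shows "bounded_clinear (cfc f P)"
  unfolding bounded_clinear_def
proof (intro conjI allI bounded_linear_cfc[OF f])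
  fix c x
  obtain ps where ps: "unif_approx f (onorm P) ps" using unif_approx_onorm_exists[OF f] by blast
  have "(\<lambda>n. poly_op (ps n) P (scaleC c x)) \<longlonglongrightarrow> cfc f P (scaleC c x)" by (rule cfc_tendsto[OF f ps])
  moreover have "(\<lambda>n. poly_op (ps n) P (scaleC c x)) \<longlonglongrightarrow> scaleC c (cfc f P x)"
    unfolding bounded_clinear_scaleC[OF bounded_clinear_poly_op[OF positive_op_bounded_clinear[OF P]]]
      by (rule tendsto_scaleC[OF cfc_tendsto[OF f ps]])
  ultimately show "cfc f P (scaleC c x) = scaleC c (cfc f P x)" using LIMSEQ_unique by blast
qed

lemma positive_op_cfc:
  assumes f: "continuous_on {0..onorm P} f" and nn: "\<And>t. 0 \<le> t \<Longrightarrow> t \<le> onorm P \<Longrightarrow> 0 \<le> f t"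
  shows "positive_op (cfc f P)"
  unfolding positive_op_def
    using bounded_clinear_cfc[OF f] selfadjoint_cfc[OF f] cfc_Re_nonneg[OF f nn] by blast

lemma cfc_onorm_le:
  assumes f: "continuous_on {0..onorm P} f" and c: "\<And>t. 0 \<le> t \<Longrightarrow> t \<le> onorm P \<Longrightarrow> \<bar>f t\<bar> \<le> c"
  shows "onorm (cfc f P) \<le> c"
proof (rule onorm_bound)
  show "0 \<le> c" using c[of 0] positive_op_onorm_nonneg[OF P] by (meson abs_ge_zero order_trans order_refl)
  show "norm (cfc f P x) \<le> c * norm x" for x by (rule cfc_norm_le[OF f c])
qed

lemma cfc_mono:
  assumes f: "continuous_on {0..onorm P} f" and g: "continuous_on {0..onorm P} g"
    and le: "\<And>t. 0 \<le> t \<Longrightarrow> t \<le> onorm P \<Longrightarrow> f t \<le> g t"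
  shows "Re (cinner (cfc f P x) x) \<le> Re (cinner (cfc g P x) x)"
proof -
  have "0 \<le> Re (cinner (cfc (\<lambda>t. g t - f t) P x) x)"
    by (rule cfc_Re_nonneg) (use le in \<open>auto intro!: continuous_intros f g\<close>)
  then show ?thesis by (simp add: cfc_diff[OF g f] cinner_diff_left)
qed

lemma cfc_mult:
  assumes f: "continuous_on {0..onorm P} f" and g: "continuous_on {0..onorm P} g"
  shows "cfc (\<lambda>t. f t * g t) P x = cfc f P (cfc g P x)"
proof -
  obtain ps qs where ps: "unif_approx f (onorm P) ps" and qs: "unif_approx g (onorm P) qs"
    using unif_approx_onorm_exists[OF f] unif_approx_onorm_exists[OF g] by blast
  obtain Bf where Bf: "Bf \<ge> 0" "\<And>t. 0 \<le> t \<Longrightarrow> t \<le> onorm P \<Longrightarrow> \<bar>f t\<bar> \<le> Bf"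
    using continuous_on_Icc_abs_bounded[OF f] by blast
  obtain Bg where Bg: "\<And>t. 0 \<le> t \<Longrightarrow> t \<le> onorm P \<Longrightarrow> \<bar>g t\<bar> \<le> Bg"
    using continuous_on_Icc_abs_bounded[OF g] by blast
  have fg: "continuous_on {0..onorm P} (\<lambda>t. f t * g t)" by (intro continuous_intros f g)
  have L1: "(\<lambda>n. poly_op (ps n * qs n) P x) \<longlonglongrightarrow> cfc (\<lambda>t. f t * g t) P x"
    by (rule cfc_tendsto[OF fg unif_approx_mult[OF ps qs]]) (use Bf Bg in auto)
  obtain N where N: "\<forall>n\<ge>N. \<forall>t\<in>{0..onorm P}. \<bar>poly (ps n) t - f t\<bar> < 1"
    using ps unfolding unif_approx_def by (meson zero_less_one)
  have nb: "norm (poly_op (ps n) P y) \<le> (Bf + 1) * norm y" if "n \<ge> N" for n y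
  proof (rule poly_op_norm_le[OF P])
    fix t assume "0 \<le> t" "t \<le> onorm P"
    then have "\<bar>poly (ps n) t - f t\<bar> < 1" "\<bar>f t\<bar> \<le> Bf" using N that Bf by auto
    then show "\<bar>poly (ps n) t\<bar> \<le> Bf + 1" by linarith
  qed
  have t1: "(\<lambda>n. poly_op (ps n) P (poly_op (qs n) P x - cfc g P x)) \<longlonglongrightarrow> 0"
  proof (rule tendsto_0_le[where K="Bf + 1"])
    show "(\<lambda>n. poly_op (qs n) P x - cfc g P x) \<longlonglongrightarrow> 0" by (rule LIM_zero[OF cfc_tendsto[OF g qs]])
    show "\<forall>\<^sub>F n in sequentially. norm (poly_op (ps n) P (poly_op (qs n) P x - cfc g P x))
        \<le> norm (poly_op (qs n) P x - cfc g P x) * (Bf + 1)"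
      using eventually_ge_at_top[of N] by eventually_elim (metis nb mult.commute)
  qed
  have t2: "(\<lambda>n. poly_op (ps n) P (cfc g P x) - cfc f P (cfc g P x)) \<longlonglongrightarrow> 0"
    by (rule LIM_zero[OF cfc_tendsto[OF f ps]])
  have "(\<lambda>n. poly_op (ps n) P (poly_op (qs n) P x - cfc g P x) +
      (poly_op (ps n) P (cfc g P x) - cfc f P (cfc g P x))) \<longlonglongrightarrow> 0"
    using tendsto_add[OF t1 t2] by simp
  then have "(\<lambda>n. poly_op (ps n * qs n) P x - cfc f P (cfc g P x)) \<longlonglongrightarrow> 0"
    by (simp add: poly_op_mult[OF positive_op_bounded_linear[OF P]]
        bounded_linear_apply_diff[OF bounded_linear_poly_op[OF positive_op_bounded_linear[OF P]]])
  then have "(\<lambda>n. poly_op (ps n * qs n) P x) \<longlonglongrightarrow> cfc f P (cfc g P x)"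
    by (rule LIM_zero_cancel)
  with L1 show ?thesis using LIMSEQ_unique by blast
qed

lemma cfc_poly_comp:
  assumes f: "continuous_on {0..onorm P} f"
  shows "poly_op q (cfc f P) x = cfc (\<lambda>t. poly q (f t)) P x"
proof (induction q arbitrary: x rule: pCons_induct)
  case 0
  have "cfc (\<lambda>t. poly 0 (f t)) P x = cfc (\<lambda>t. 0) P x" by simp
  then show ?case using cfc_const[of 0 x] by simp
next
  case (pCons a q)
  have Fl: "bounded_linear (cfc f P)" by (rule bounded_linear_cfc[OF f])
  have cq: "continuous_on {0..onorm P} (\<lambda>t. poly q (f t))"
    by (rule continuous_on_poly[OF f])
  have "cfc (\<lambda>t. poly (pCons a q) (f t)) P x = cfc (\<lambda>t. a + f t * poly q (f t)) P x" by simp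
  also have "\<dots> = a *\<^sub>R x + cfc f P (cfc (\<lambda>t. poly q (f t)) P x)"
    using cfc_add[OF continuous_on_const, of "\<lambda>t. f t * poly q (f t)" a x]
      cfc_const[of a x] cfc_mult[OF f cq, of x]
    by (simp add: continuous_on_mult[OF f cq])
  also have "\<dots> = poly_op (pCons a q) (cfc f P) x"
    by (simp add: poly_op_pCons[OF Fl] pCons.IH)
  finally show ?case ..
qed

end

lemma cfc_comp:
  fixes P :: "'a::{complex_inner, complete_space} \<Rightarrow> 'a"
  assumes P: "positive_op P" and f: "continuous_on {0..onorm P} f"
    and nn: "\<And>t. 0 \<le> t \<Longrightarrow> t \<le> onorm P \<Longrightarrow> 0 \<le> f t" and g: "continuous_on {0..} g"
  shows "cfc g (cfc f P) x = cfc (\<lambda>t. g (f t)) P x"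
proof -
  let ?F = "cfc f P"
  have F: "positive_op ?F" by (rule positive_op_cfc[OF P f nn])
  obtain B where B: "B \<ge> 0" "\<And>t. 0 \<le> t \<Longrightarrow> t \<le> onorm P \<Longrightarrow> \<bar>f t\<bar> \<le> B"
    using continuous_on_Icc_abs_bounded[OF f] by blast
  have oF: "onorm ?F \<le> B" by (rule cfc_onorm_le[OF P f]) (use B in auto)
  have gB: "continuous_on {0..B} g" using g by (rule continuous_on_subset) auto
  obtain qs where qs: "unif_approx g B qs" using unif_approx_exists[OF gB B(1)] by blast
  have gF: "continuous_on {0..onorm ?F} g" using g by (rule continuous_on_subset) auto
  have gf: "continuous_on {0..onorm P} (\<lambda>t. g (f t))"
    by (rule continuous_on_compose2[OF g f]) (use nn in auto)
  have cq: "continuous_on {0..onorm P} (\<lambda>t. poly (qs n) (f t))" for n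
    by (rule continuous_on_poly[OF f])
  have "op_tendsto (\<lambda>n. poly_op (qs n) ?F) (cfc (\<lambda>t. g (f t)) P)"
    unfolding op_tendsto_def
  proof (intro allI impI)
    fix e :: real assume "e > 0"
    then obtain N where N: "\<forall>n\<ge>N. \<forall>t\<in>{0..B}. \<bar>poly (qs n) t - g t\<bar> < e"
      using qs unfolding unif_approx_def by blast
    have "norm (poly_op (qs n) ?F x - cfc (\<lambda>t. g (f t)) P x) \<le> e * norm x" if n: "n \<ge> N" for n x
    proof -
      have "poly_op (qs n) ?F x - cfc (\<lambda>t. g (f t)) P x = cfc (\<lambda>t. poly (qs n) (f t) - g (f t)) P x"
        by (simp add: cfc_poly_comp[OF P f] cfc_diff[OF P cq gf])
      also have "norm \<dots> \<le> e * norm x"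
      proof (rule cfc_norm_le[OF P])
        show "continuous_on {0..onorm P} (\<lambda>t. poly (qs n) (f t) - g (f t))"
          by (intro continuous_on_diff cq gf)
        fix t assume "0 \<le> t" "t \<le> onorm P"
        then have "f t \<in> {0..B}" using nn B by fastforce
        then show "\<bar>poly (qs n) (f t) - g (f t)\<bar> \<le> e" using N n by fastforce
      qed
      finally show ?thesis .
    qed
    then show "\<exists>N. \<forall>n\<ge>N. \<forall>x. norm (poly_op (qs n) ?F x - cfc (\<lambda>t. g (f t)) P x) \<le> e * norm x"
      by blast
  qed
  then show ?thesis
    using cfc_tendsto[OF F gF unif_approx_mono[OF qs oF]] op_tendsto_imp_tendsto LIMSEQ_unique by blast
qed

section \<open>Riesz representation and adjoints\<close>

lemma parallelogram_law_cinner: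
  "(norm (a + b))\<^sup>2 + (norm (a - b))\<^sup>2 = 2 * (norm a)\<^sup>2 + 2 * (norm (b::'a::complex_inner))\<^sup>2"
  by (simp add: norm_add_square_cinner norm_diff_square_cinner)

text \<open>Two almost minimal points of a convex set are close, since their midpoint is no closer.\<close>

lemma norm_diff_almost_minimizers:
  fixes x0 a b :: "'a::complex_inner"
  assumes d: "0 \<le> d" "d \<le> norm (x0 - (1/2) *\<^sub>R (a + b))"
    and a: "norm (x0 - a) \<le> d + e1" "0 \<le> e1" "e1 \<le> 1"
    and b: "norm (x0 - b) \<le> d + e2" "0 \<le> e2" "e2 \<le> 1"
  shows "(norm (a - b))\<^sup>2 \<le> 2 * (2 * d + 1) * (e1 + e2)"
proof -
  have "(x0 - a) + (x0 - b) = 2 *\<^sub>R (x0 - (1/2) *\<^sub>R (a + b))"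
    by (simp add: algebra_simps scaleR_2)
  then have mid: "4 * d\<^sup>2 \<le> (norm ((x0 - a) + (x0 - b)))\<^sup>2"
    using d power_mono[of "2 * d" "norm ((x0 - a) + (x0 - b))" 2] by (simp add: power_mult_distrib)
  have par: "(norm ((x0 - a) + (x0 - b)))\<^sup>2 + (norm (a - b))\<^sup>2
      = 2 * (norm (x0 - a))\<^sup>2 + 2 * (norm (x0 - b))\<^sup>2"
    using parallelogram_law_cinner[of "x0 - a" "x0 - b"] by (simp add: norm_minus_commute)
  have sq: "(norm (x0 - a))\<^sup>2 \<le> (d + e1)\<^sup>2" "(norm (x0 - b))\<^sup>2 \<le> (d + e2)\<^sup>2"
    using a b by (auto intro: power_mono)
  have bnd: "(d + e)\<^sup>2 \<le> d\<^sup>2 + (2 * d + 1) * e" if "0 \<le> e" "e \<le> 1" for e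
    using that d mult_left_mono[of e 1 e] by (simp add: power2_sum power2_eq_square algebra_simps)
  have "(norm (a - b))\<^sup>2 \<le> 2 * ((2 * d + 1) * e1) + 2 * ((2 * d + 1) * e2)"
    using mid par sq bnd[OF a(2,3)] bnd[OF b(2,3)] by linarith
  then show ?thesis by (simp add: algebra_simps)
qed

lemma closest_point_exists:
  fixes K :: "'a::{complex_inner, complete_space} set"
  assumes K: "closed K" "convex K" "K \<noteq> {}"
  obtains k where "k \<in> K" "\<And>k'. k' \<in> K \<Longrightarrow> norm (x0 - k) \<le> norm (x0 - k')"
proof -
  define d where "d = Inf ((\<lambda>k. norm (x0 - k)) ` K)"
  have dle: "d \<le> norm (x0 - k)" if "k \<in> K" for k
    unfolding d_def by (rule cInf_lower) (use that in \<open>auto intro: bdd_belowI[of _ 0]\<close>)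
  have d0: "0 \<le> d" unfolding d_def using K(3) by (auto intro!: cInf_greatest)
  have bdd: "bdd_below ((\<lambda>k. norm (x0 - k)) ` K)" by (auto intro: bdd_belowI[of _ 0])
  have "\<exists>k\<in>K. norm (x0 - k) < d + 1 / (real n + 1)" for n
    using cInf_less_iff[OF _ bdd, of "d + 1 / (real n + 1)"] K(3) by (simp add: d_def)
  then obtain ks where ks: "\<And>n. ks n \<in> K" "\<And>n. norm (x0 - ks n) < d + 1 / (real n + 1)"
    by metis
  have mid: "(1/2) *\<^sub>R (ks n + ks m) \<in> K" for n m
    using convexD[OF K(2) ks(1)[of n] ks(1)[of m], of "1/2" "1/2"] by (simp add: scaleR_add_right)
  have sq: "(norm (ks n - ks m))\<^sup>2 \<le> 2 * (2 * d + 1) * (1 / (real n + 1) + 1 / (real m + 1))" for n m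
    by (rule norm_diff_almost_minimizers[OF d0 dle[OF mid]]) (use ks(2) in \<open>auto simp: less_imp_le\<close>)
  have "Cauchy ks"
  proof (rule CauchyI)
    fix e :: real assume e: "0 < e"
    obtain N :: nat where N: "real N > 4 * (2 * d + 1) / e\<^sup>2" using reals_Archimedean2 by blast
    have Npos: "real N > 0" using N e d0 by (smt (verit) divide_pos_pos zero_less_power)
    have "norm (ks m - ks n) < e" if "N \<le> m" "N \<le> n" for m n
    proof -
      have "1 / (real m + 1) < 1 / real N" "1 / (real n + 1) < 1 / real N"
        using that Npos by (auto simp: frac_less2)
      then have "1 / (real m + 1) + 1 / (real n + 1) < 2 / real N" by simp
      then have "(norm (ks m - ks n))\<^sup>2 < 2 * (2 * d + 1) * (2 / real N)"
        using sq[of m n] d0 by (smt (verit) mult_strict_left_mono)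
      also have "\<dots> < e\<^sup>2" using N Npos e by (simp add: field_simps)
      finally show ?thesis using e by (simp add: power_less_imp_less_base)
    qed
    then show "\<exists>M. \<forall>m\<ge>M. \<forall>n\<ge>M. norm (ks m - ks n) < e" by blast
  qed
  then obtain k where k: "ks \<longlonglongrightarrow> k" using Cauchy_convergent_iff convergent_def by blast
  have "norm (x0 - k) \<le> d"
  proof (rule tendsto_le[OF trivial_limit_sequentially])
    show "(\<lambda>n. d + 1 / (real n + 1)) \<longlonglongrightarrow> d"
      using tendsto_add[OF tendsto_const[of d] LIMSEQ_inverse_real_of_nat]
      by (simp add: inverse_eq_divide add.commute)
    show "(\<lambda>n. norm (x0 - ks n)) \<longlonglongrightarrow> norm (x0 - k)" by (intro tendsto_intros k)
    show "\<forall>\<^sub>F n in sequentially. norm (x0 - ks n) \<le> d + 1 / (real n + 1)"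
      using ks(2) by (simp add: less_imp_le)
  qed
  then show thesis using closed_sequentially[OF K(1) ks(1) k] dle that by (meson order_trans)
qed

lemma cinner_eq_0_of_min_norm:
  fixes u :: "'a::complex_inner"
  assumes min: "\<And>t. norm u \<le> norm (u - scaleC t w)"
  shows "cinner u w = 0"
proof -
  define a where "a = cinner u w"
  define s where "s = 1 / ((norm w)\<^sup>2 + 1)"
  have wp: "(norm w)\<^sup>2 + 1 > 0" by (smt (verit) zero_le_power2)
  have s: "s > 0" "s * (norm w)\<^sup>2 < 1"
    unfolding s_def using wp by (auto simp: divide_less_eq)
  define t where "t = complex_of_real s * cnj a"
  have "(norm u)\<^sup>2 \<le> (norm (u - scaleC t w))\<^sup>2" using min[of t] by (simp add: power_mono)
  also have "(norm (u - scaleC t w))\<^sup>2 = (norm u)\<^sup>2 - 2 * s * (cmod a)\<^sup>2 + s\<^sup>2 * (cmod a)\<^sup>2 * (norm w)\<^sup>2"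
  proof -
    have "(norm (u - scaleC t w))\<^sup>2
        = (norm u)\<^sup>2 + (norm (scaleC t w))\<^sup>2 - 2 * Re (cinner u (scaleC t w))"
      by (rule norm_diff_square_cinner)
    also have "Re (cinner u (scaleC t w)) = s * (cmod a)\<^sup>2"
      by (simp add: cinner_scaleC_right t_def a_def[symmetric] complex_mult_cnj cmod_power2)
         (simp add: algebra_simps power2_eq_square)
    also have "(norm (scaleC t w))\<^sup>2 = s\<^sup>2 * (cmod a)\<^sup>2 * (norm w)\<^sup>2"
      using s by (simp add: norm_scaleC t_def norm_mult power_mult_distrib)
    finally show ?thesis by simp
  qed
  finally have "0 \<le> s * (cmod a)\<^sup>2 * (s * (norm w)\<^sup>2 - 2)"
    by (simp add: algebra_simps power2_eq_square)
  moreover have "s * (norm w)\<^sup>2 - 2 < 0" using s by simp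
  ultimately have "s * (cmod a)\<^sup>2 \<le> 0" by (smt (verit) mult_pos_neg)
  then have "cmod a = 0" using s by (simp add: mult_le_0_iff)
  then show ?thesis by (simp add: a_def)
qed

lemma Riesz_representation:
  fixes \<phi> :: "'a::{complex_inner, complete_space} \<Rightarrow> complex"
  assumes bl: "bounded_linear \<phi>" and cl: "\<And>c x. \<phi> (scaleC c x) = c * \<phi> x"
  shows "\<exists>z. \<forall>x. \<phi> x = cinner z x"
proof (cases "\<forall>x. \<phi> x = 0")
  case True then show ?thesis by (intro exI[of _ 0]) simp
next
  case False
  then obtain x0 where x0: "\<phi> x0 \<noteq> 0" by blast
  define K where "K = {x. \<phi> x = 0}"
  have Kc: "closed K" unfolding K_def
    by (rule closed_Collect_eq) (auto intro: linear_continuous_on[OF bl] continuous_on_const)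
  have K0: "0 \<in> K" by (simp add: K_def bounded_linear_apply_0[OF bl])
  have Kadd: "x + y \<in> K" if "x \<in> K" "y \<in> K" for x y using that
    by (simp add: K_def bounded_linear_apply_add[OF bl])
  have Kconv: "convex K"
    by (auto simp: convex_def K_def bounded_linear_apply_add[OF bl] bounded_linear_apply_scaleR[OF bl])
  have KC: "scaleC c x \<in> K" if "x \<in> K" for x c using that by (simp add: K_def cl)
  obtain k where kK: "k \<in> K" and kmin: "\<And>k'. k' \<in> K \<Longrightarrow> norm (x0 - k) \<le> norm (x0 - k')"
    using closest_point_exists[OF Kc Kconv] K0 by blast
  define u where "u = x0 - k"
  have \<phi>u: "\<phi> u = \<phi> x0" using kK by (simp add: u_def K_def bounded_linear_apply_diff[OF bl])
  have orth: "cinner u w = 0" if "w \<in> K" for w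
  proof (rule cinner_eq_0_of_min_norm)
    fix t
    have "k + scaleC t w \<in> K" using kK that KC Kadd by blast
    then have "norm (x0 - k) \<le> norm (x0 - (k + scaleC t w))" using kmin by blast
    then show "norm u \<le> norm (u - scaleC t w)" by (simp add: u_def algebra_simps)
  qed
  have u0: "u \<noteq> 0" using \<phi>u x0 bounded_linear_apply_0[OF bl] by auto
  have cuu: "cinner u u \<noteq> 0" using u0 by simp
  define z where "z = scaleC (cnj (\<phi> u / cinner u u)) u"
  show ?thesis
  proof (intro exI[of _ z] allI)
    fix x
    have "x - scaleC (\<phi> x / \<phi> u) u \<in> K"
      using x0 \<phi>u by (simp add: K_def bounded_linear_apply_diff[OF bl] cl)
    then have "cinner u (x - scaleC (\<phi> x / \<phi> u) u) = 0" by (rule orth)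
    then have "cinner u x = \<phi> x / \<phi> u * cinner u u" by (simp add: cinner_diff_right cinner_scaleC_right)
    then show "\<phi> x = cinner z x"
      using cuu x0 \<phi>u by (simp add: z_def cinner_scaleC_left field_simps)
  qed
qed

lemma adjoint_exists:
  fixes A :: "'a::{complex_inner, complete_space} \<Rightarrow> 'a"
  assumes A: "bounded_clinear A"
  shows "\<exists>Y. \<forall>x y. cinner (A x) y = cinner x (Y y)"
proof -
  have "\<exists>z. \<forall>x. cinner (A x) y = cinner x z" for y
  proof -
    have bl: "bounded_linear (\<lambda>x. cinner y (A x))"
    proof (rule bounded_linear_intro[where K="norm y * onorm A"])
      show "cinner y (A (x + z)) = cinner y (A x) + cinner y (A z)" for x z
        by (simp add: bounded_linear_apply_add[OF bounded_clinear_imp_bounded_linear[OF A]]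
            cinner_add_right)
      show "cinner y (A (r *\<^sub>R x)) = r *\<^sub>R cinner y (A x)" for r x
        by (simp add: bounded_linear_apply_scaleR[OF bounded_clinear_imp_bounded_linear[OF A]]
            cinner_scaleR_right scaleR_conv_of_real)
      show "norm (cinner y (A x)) \<le> norm x * (norm y * onorm A)" for x
      proof -
        have "norm (cinner y (A x)) \<le> norm y * norm (A x)"
          using Cauchy_Schwarz_cinner[of y "A x"] by simp
        also have "\<dots> \<le> norm y * (onorm A * norm x)"
          by (rule mult_left_mono[OF bounded_clinear_norm_le[OF A]]) simp
        finally show ?thesis by (simp add: ac_simps)
      qed
    qed
    obtain z where z: "\<forall>x. cinner y (A x) = cinner z x"
      using Riesz_representation[OF bl] by (metis bounded_clinear_scaleC[OF A] cinner_scaleC_right)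
    show ?thesis
    proof (intro exI[of _ z] allI)
      fix x show "cinner (A x) y = cinner x z"
        using z by (metis cinner_commute)
    qed
  qed
  then show ?thesis by metis
qed

lemma cinner_adj_right:
  fixes A :: "'a::{complex_inner, complete_space} \<Rightarrow> 'a"
  assumes A: "bounded_clinear A"
  shows "cinner (A x) y = cinner x (adj A y)"
proof -
  obtain Y where Y: "\<forall>x y. cinner (A x) y = cinner x (Y y)" using adjoint_exists[OF A] by blast
  have "adj A = Y" unfolding adj_def
  proof (rule the_equality)
    show "\<forall>x y. cinner (A x) y = cinner x (Y y)" by (rule Y)
    fix Z assume Z: "\<forall>x y. cinner (A x) y = cinner x (Z y)"
    show "Z = Y"
    proof
      fix y show "Z y = Y y" by (rule cinner_ext) (metis Y Z)
    qed
  qed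
  then show ?thesis using Y by simp
qed

lemma cinner_adj_left:
  fixes A :: "'a::{complex_inner, complete_space} \<Rightarrow> 'a"
  assumes A: "bounded_clinear A"
  shows "cinner (adj A y) x = cinner y (A x)"
  by (metis cinner_adj_right[OF A] cinner_commute)

lemma bounded_clinear_adj:
  fixes A :: "'a::{complex_inner, complete_space} \<Rightarrow> 'a"
  assumes A: "bounded_clinear A"
  shows "bounded_clinear (adj A)"
proof -
  have add: "adj A (x + y) = adj A x + adj A y" for x y
    by (rule cinner_ext) (simp add: cinner_adj_right[OF A, symmetric] cinner_add_right)
  have scC: "adj A (scaleC c x) = scaleC c (adj A x)" for c x
    by (rule cinner_ext) (simp add: cinner_adj_right[OF A, symmetric] cinner_scaleC_right)
  have scR: "adj A (r *\<^sub>R x) = r *\<^sub>R adj A x" for r x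
    by (simp add: scaleR_scaleC scC)
  have nb: "norm (adj A y) \<le> norm y * onorm A" for y
  proof -
    have "(norm (adj A y))\<^sup>2 = Re (cinner (A (adj A y)) y)"
      by (simp add: cinner_adj_right[OF A] Re_cinner_self)
    also have "\<dots> \<le> norm (A (adj A y)) * norm y" by (rule Re_cinner_le)
    also have "\<dots> \<le> onorm A * norm (adj A y) * norm y"
      by (rule mult_right_mono[OF bounded_clinear_norm_le[OF A]]) simp
    finally have "norm (adj A y) * norm (adj A y) \<le> (norm y * onorm A) * norm (adj A y)"
      by (simp add: power2_eq_square algebra_simps)
    then show ?thesis
      by (cases "adj A y = 0") (auto simp: bounded_clinear_onorm_nonneg[OF A])
  qed
  show ?thesis unfolding bounded_clinear_def
    using bounded_linear_intro[of "adj A", OF add scR nb] scC by blast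
qed

lemma adj_adj:
  fixes A :: "'a::{complex_inner, complete_space} \<Rightarrow> 'a"
  assumes A: "bounded_clinear A"
  shows "adj (adj A) = A"
proof
  fix y
  show "adj (adj A) y = A y"
    by (rule cinner_ext) (metis cinner_adj_right[OF bounded_clinear_adj[OF A]] cinner_adj_left[OF A])
qed

lemma positive_op_adj_comp:
  fixes A :: "'a::{complex_inner, complete_space} \<Rightarrow> 'a"
  assumes A: "bounded_clinear A"
  shows "positive_op (adj A \<circ> A)"
  unfolding positive_op_def
proof (intro conjI allI)
  show "bounded_clinear (adj A \<circ> A)"
    by (rule bounded_clinear_compose[OF bounded_clinear_adj[OF A] A, unfolded comp_def[symmetric]])
  show "selfadjoint (adj A \<circ> A)" unfolding selfadjoint_def
    by (simp add: cinner_adj_right[OF A, symmetric] cinner_adj_left[OF A])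
  fix x show "0 \<le> Re (cinner ((adj A \<circ> A) x) x)"
    by (simp add: cinner_adj_left[OF A] Re_cinner_self)
qed

lemma positive_op_comp_adj:
  fixes A :: "'a::{complex_inner, complete_space} \<Rightarrow> 'a"
  assumes A: "bounded_clinear A"
  shows "positive_op (A \<circ> adj A)"
  using positive_op_adj_comp[OF bounded_clinear_adj[OF A]] adj_adj[OF A] by simp

section \<open>The mixed Schwarz inequality\<close>

lemma poly_op_intertwining:
  fixes A :: "'a::{complex_inner, complete_space} \<Rightarrow> 'a"
  assumes A: "bounded_clinear A"
  shows "A (poly_op p (adj A \<circ> A) z) = poly_op p (A \<circ> adj A) (A z)"
proof (induction p arbitrary: z rule: pCons_induct)
  case 0 then show ?case
    by (simp add: bounded_linear_apply_0[OF bounded_clinear_imp_bounded_linear[OF A]])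
next
  case (pCons a p)
  have Al: "bounded_linear A" by (rule bounded_clinear_imp_bounded_linear[OF A])
  have Sl: "bounded_linear (adj A \<circ> A)"
    by (rule positive_op_bounded_linear[OF positive_op_adj_comp[OF A]])
  have Tl: "bounded_linear (A \<circ> adj A)"
    by (rule positive_op_bounded_linear[OF positive_op_comp_adj[OF A]])
  show ?case
    unfolding poly_op_pCons[OF Sl] poly_op_pCons[OF Tl] bounded_linear_apply_add[OF Al]
      bounded_linear_apply_scaleR[OF Al] pCons.IH[symmetric] by simp
qed

lemma cfc_intertwining:
  fixes A :: "'a::{complex_inner, complete_space} \<Rightarrow> 'a"
  assumes A: "bounded_clinear A" and c: "continuous_on {0..} c"
  shows "A (cfc c (adj A \<circ> A) (adj A y)) = cfc (\<lambda>t. c t * t) (A \<circ> adj A) y"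
proof -
  let ?S = "adj A \<circ> A" and ?T = "A \<circ> adj A"
  have S: "positive_op ?S" by (rule positive_op_adj_comp[OF A])
  have T: "positive_op ?T" by (rule positive_op_comp_adj[OF A])
  define K where "K = max (onorm ?S) (onorm ?T)"
  have K0: "0 \<le> K" using positive_op_onorm_nonneg[OF S] by (simp add: K_def)
  have cK: "continuous_on {0..K} c" using c by (rule continuous_on_subset) auto
  obtain ps where ps: "unif_approx c K ps" using unif_approx_exists[OF cK K0] by blast
  have cS: "continuous_on {0..onorm ?S} c" using c by (rule continuous_on_subset) auto
  have cT: "continuous_on {0..onorm ?T} (\<lambda>t. c t * t)"
    by (intro continuous_intros) (rule continuous_on_subset[OF c], auto)
  obtain Bc where Bc: "\<And>t. 0 \<le> t \<Longrightarrow> t \<le> K \<Longrightarrow> \<bar>c t\<bar> \<le> Bc"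
    using continuous_on_Icc_abs_bounded[OF cK] by blast
  have id: "poly [:0,1:] = (\<lambda>t::real. t)" by (simp add: fun_eq_iff)
  have apT: "unif_approx (\<lambda>t. c t * t) K (\<lambda>n. ps n * [:0,1:])"
    using unif_approx_mult[OF ps unif_approx_const_poly[of "[:0,1:]"], of Bc K] Bc
    unfolding id by auto
  have L1: "(\<lambda>n. poly_op (ps n * [:0,1:]) ?T y) \<longlonglongrightarrow> cfc (\<lambda>t. c t * t) ?T y"
    by (rule cfc_tendsto[OF T cT unif_approx_mono[OF apT]]) (simp add: K_def)
  have L2: "(\<lambda>n. poly_op (ps n) ?S (adj A y)) \<longlonglongrightarrow> cfc c ?S (adj A y)"
    by (rule cfc_tendsto[OF S cS unif_approx_mono[OF ps]]) (simp add: K_def)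
  have L3: "(\<lambda>n. A (poly_op (ps n) ?S (adj A y))) \<longlonglongrightarrow> A (cfc c ?S (adj A y))"
    by (rule isCont_tendsto_compose[OF _ L2])
       (rule linear_continuous_at[OF bounded_clinear_imp_bounded_linear[OF A]])
  have Tl: "bounded_linear ?T" by (rule positive_op_bounded_linear[OF T])
  have "A (poly_op (ps n) ?S (adj A y)) = poly_op (ps n * [:0,1:]) ?T y" for n
    unfolding poly_op_mult[OF Tl] poly_op_X[OF Tl] poly_op_intertwining[OF A] by simp
  with L1 L3 show ?thesis using LIMSEQ_unique by auto
qed

lemma norm_cfc_square:
  fixes S :: "'a::{complex_inner, complete_space} \<Rightarrow> 'a"
  assumes S: "positive_op S" and a: "continuous_on {0..onorm S} a"
  shows "(norm (cfc a S x))\<^sup>2 = Re (cinner (cfc (\<lambda>t. a t * a t) S x) x)"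
proof -
  have "cinner (cfc a S (cfc a S x)) x = cinner (cfc a S x) (cfc a S x)"
    using selfadjoint_cfc[OF S a] unfolding selfadjoint_def by blast
  then show ?thesis by (simp add: Re_cinner_self cfc_mult[OF S a a])
qed

lemma norm_cfc_adj_square:
  fixes A :: "'a::{complex_inner, complete_space} \<Rightarrow> 'a"
  assumes A: "bounded_clinear A" and b: "continuous_on {0..} b"
  shows "(norm (cfc b (adj A \<circ> A) (adj A y)))\<^sup>2
    = Re (cinner (cfc (\<lambda>t. b t * b t * t) (A \<circ> adj A) y) y)"
proof -
  have bS: "continuous_on {0..onorm (adj A \<circ> A)} b" using b by (rule continuous_on_subset) auto
  have bb: "continuous_on {0..} (\<lambda>t. b t * b t)" by (intro continuous_intros b)
  show ?thesis
    unfolding norm_cfc_square[OF positive_op_adj_comp[OF A] bS]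
    by (simp add: cinner_adj_right[OF A, symmetric] cfc_intertwining[OF A bb])
qed

text \<open>With a = sqrt(m + \<epsilon>) and b = 1/a one has x = b(A*A) a(A*A) x, hence
  \<langle>Ax, y\<rangle> = \<langle>a(A*A) x, b(A*A) A* y\<rangle>, and b(t)^2 t = t / (m t + \<epsilon>) \<le> k t.\<close>

lemma divide_add_pos_le:
  fixes m k t e :: real
  assumes "0 \<le> m" "0 \<le> k" "m * k = t" "e > 0"
  shows "t / (m + e) \<le> k"
proof (cases "m = 0")
  case False
  then have "t / (m + e) \<le> t / m" using assms by (intro divide_left_mono) auto
  also have "t / m = k" using assms False by (simp add: field_simps)
  finally show ?thesis .
qed (use assms in simp)

lemma mixed_schwarz_perturbed:
  fixes A :: "'a::{complex_inner, complete_space} \<Rightarrow> 'a"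
  assumes A: "bounded_clinear A"
    and m: "continuous_on {0..} m" and k: "continuous_on {0..} k"
    and mnn: "\<And>t. 0 \<le> t \<Longrightarrow> 0 \<le> m t" and knn: "\<And>t. 0 \<le> t \<Longrightarrow> 0 \<le> k t"
    and mk: "\<And>t. 0 \<le> t \<Longrightarrow> m t * k t = t" and eps: "\<epsilon> > 0"
  shows "(cmod (cinner (A x) y))\<^sup>2 \<le>
     (Re (cinner (cfc m (adj A \<circ> A) x) x) + \<epsilon> * (norm x)\<^sup>2) * Re (cinner (cfc k (A \<circ> adj A) y) y)"
proof -
  let ?S = "adj A \<circ> A" and ?T = "A \<circ> adj A"
  have S: "positive_op ?S" by (rule positive_op_adj_comp[OF A])
  have T: "positive_op ?T" by (rule positive_op_comp_adj[OF A])
  define a where "a t = sqrt (m t + \<epsilon>)" for t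
  define b where "b t = 1 / sqrt (m t + \<epsilon>)" for t
  have pos: "0 < m t + \<epsilon>" if "0 \<le> t" for t using mnn[OF that] eps by simp
  have ca: "continuous_on {0..} a" unfolding a_def by (intro continuous_intros m)
  have cb: "continuous_on {0..} b" unfolding b_def
    by (intro continuous_intros m) (use pos in fastforce)
  have caS: "continuous_on {0..onorm ?S} a" using ca by (rule continuous_on_subset) auto
  have cbS: "continuous_on {0..onorm ?S} b" using cb by (rule continuous_on_subset) auto
  have mS: "continuous_on {0..onorm ?S} m" using m by (rule continuous_on_subset) auto
  have "cfc b ?S (cfc a ?S x) = cfc (\<lambda>t. 1) ?S x"
    unfolding cfc_mult[OF S cbS caS, symmetric]
    by (rule arg_cong[where f="\<lambda>F. F x"], rule cfc_cong[OF S]) (use pos in \<open>fastforce simp: a_def b_def\<close>)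
  then have "cfc b ?S (cfc a ?S x) = x" using cfc_const[OF S, of 1 x] by simp
  then have "cinner (A x) y = cinner (cfc a ?S x) (cfc b ?S (adj A y))"
    using selfadjoint_cfc[OF S cbS] unfolding selfadjoint_def
    by (metis cinner_adj_right[OF A])
  then have cs: "(cmod (cinner (A x) y))\<^sup>2 \<le> (norm (cfc a ?S x))\<^sup>2 * (norm (cfc b ?S (adj A y)))\<^sup>2"
    using Cauchy_Schwarz_cinner by (metis norm_ge_zero power_mono power_mult_distrib)
  have na: "(norm (cfc a ?S x))\<^sup>2 = Re (cinner (cfc m ?S x) x) + \<epsilon> * (norm x)\<^sup>2"
  proof -
    have "cfc (\<lambda>t. a t * a t) ?S = cfc (\<lambda>t. m t + \<epsilon>) ?S"
      by (rule cfc_cong[OF S]) (use pos in \<open>simp add: a_def less_imp_le\<close>)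
    then show ?thesis
      using cfc_add[OF S mS continuous_on_const, of \<epsilon> x] cfc_const[OF S, of \<epsilon> x]
      by (simp add: norm_cfc_square[OF S caS] cinner_add_left cinner_scaleR_left Re_cinner_self)
  qed
  have nb: "(norm (cfc b ?S (adj A y)))\<^sup>2 \<le> Re (cinner (cfc k ?T y) y)"
    unfolding norm_cfc_adj_square[OF A cb]
  proof (rule cfc_mono[OF T])
    show "continuous_on {0..onorm ?T} (\<lambda>t. b t * b t * t)"
      by (intro continuous_intros continuous_on_subset[OF cb]) auto
    show "continuous_on {0..onorm ?T} k" using k by (rule continuous_on_subset) auto
    fix t :: real assume t: "0 \<le> t" "t \<le> onorm ?T"
    show "b t * b t * t \<le> k t"
      using divide_add_pos_le[OF mnn[OF t(1)] knn[OF t(1)] mk[OF t(1)] eps] pos[OF t(1)]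
      by (simp add: b_def)
  qed
  have "0 \<le> Re (cinner (cfc m ?S x) x) + \<epsilon> * (norm x)\<^sup>2"
    using cfc_Re_nonneg[OF S mS mnn, of x] eps by simp
  then show ?thesis using cs mult_left_mono[OF nb] unfolding na by (meson order_trans)
qed

lemma mixed_schwarz:
  fixes A :: "'a::{complex_inner, complete_space} \<Rightarrow> 'a"
  assumes A: "bounded_clinear A"
    and m: "continuous_on {0..} m" and k: "continuous_on {0..} k"
    and mnn: "\<And>t. 0 \<le> t \<Longrightarrow> 0 \<le> m t" and knn: "\<And>t. 0 \<le> t \<Longrightarrow> 0 \<le> k t"
    and mk: "\<And>t. 0 \<le> t \<Longrightarrow> m t * k t = t"
  shows "(cmod (cinner (A x) y))\<^sup>2 \<le>
     Re (cinner (cfc m (adj A \<circ> A) x) x) * Re (cinner (cfc k (A \<circ> adj A) y) y)"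
proof (rule field_le_epsilon)
  define Q where "Q = Re (cinner (cfc m (adj A \<circ> A) x) x)"
  define R where "R = Re (cinner (cfc k (A \<circ> adj A) y) y)"
  have R: "0 \<le> R" unfolding R_def
    by (rule cfc_Re_nonneg[OF positive_op_comp_adj[OF A] continuous_on_subset[OF k]]) (use knn in auto)
  fix e :: real assume e: "e > 0"
  define \<epsilon> where "\<epsilon> = e / ((norm x)\<^sup>2 * R + 1)"
  have d: "0 < (norm x)\<^sup>2 * R + 1" using R by (simp add: add_nonneg_pos)
  then have "\<epsilon> > 0" using e by (simp add: \<epsilon>_def)
  then have "(cmod (cinner (A x) y))\<^sup>2 \<le> Q * R + \<epsilon> * ((norm x)\<^sup>2 * R)"
    using mixed_schwarz_perturbed[OF A m k mnn knn mk] by (simp add: Q_def R_def algebra_simps)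
  also have "\<epsilon> * ((norm x)\<^sup>2 * R) \<le> e"
    using d e by (simp add: \<epsilon>_def divide_le_eq)
  finally show "(cmod (cinner (A x) y))\<^sup>2 \<le> Q * R + e" by simp
qed

lemma convex_on_powr_nonneg:
  assumes s: "s \<ge> 1"
  shows "convex_on {0..} (\<lambda>t::real. t powr s)"
proof (rule convex_onI)
  show "convex {0::real..}" by (rule convex_real_interval)
  fix t x y :: real assume t: "0 < t" "t < 1" and x: "x \<in> {0..}" and y: "y \<in> {0..}"
  have s0: "s > 0" using s by simp
  show "((1 - t) *\<^sub>R x + t *\<^sub>R y) powr s \<le> (1 - t) * x powr s + t * y powr s"
  proof (cases "x = 0 \<or> y = 0")
    case True
    then show ?thesis
    proof
      assume x0: "x = 0"
      have "(t * y) powr s = t powr s * y powr s" using t y by (simp add: powr_mult)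
      also have "\<dots> \<le> t * y powr s" by (rule mult_right_mono[OF powr_le_one_le]) (use t s in auto)
      finally show ?thesis using x0 s0 by simp
    next
      assume y0: "y = 0"
      have "((1 - t) * x) powr s = (1 - t) powr s * x powr s" using t x by (simp add: powr_mult)
      also have "\<dots> \<le> (1 - t) * x powr s" by (rule mult_right_mono[OF powr_le_one_le]) (use t s in auto)
      finally show ?thesis using y0 s0 by simp
    qed
  next
    case False
    then have "x \<in> {0<..}" "y \<in> {0<..}" using x y by auto
    then show ?thesis using convex_onD[OF powr_convex[OF s], of t x y] t by simp
  qed
qed

lemma convex_on_mono_compose:
  fixes h g :: "real \<Rightarrow> real"
  assumes h: "convex_on {0..} h" and hm: "mono_on {0..} h"
    and g: "convex_on {0..} g" and gnn: "\<And>t. 0 \<le> t \<Longrightarrow> 0 \<le> (g t :: real)"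
  shows "convex_on {0..} (\<lambda>t. h (g t :: real))"
proof (rule convex_onI)
  show "convex {0::real..}" by (rule convex_real_interval)
  fix t x y :: real assume t: "0 < t" "t < 1" and x: "x \<in> {0..}" and y: "y \<in> {0..}"
  have xy: "(1 - t) *\<^sub>R x + t *\<^sub>R y \<in> {0..}" using t x y by simp
  have "g ((1 - t) *\<^sub>R x + t *\<^sub>R y) \<le> (1 - t) * g x + t * g y"
    using convex_onD[OF g, of t x y] t x y by simp
  moreover have "0 \<le> g ((1 - t) *\<^sub>R x + t *\<^sub>R y)" using gnn xy by simp
  moreover have "0 \<le> (1 - t) * g x + t * g y" using gnn x y t by simp
  ultimately have "h (g ((1 - t) *\<^sub>R x + t *\<^sub>R y)) \<le> h ((1 - t) * g x + t * g y)"
    using hm unfolding mono_on_def by simp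
  also have "\<dots> \<le> (1 - t) * h (g x) + t * h (g y)"
    using convex_onD[OF h, of t "g x" "g y"] t gnn x y by simp
  finally show "h (g ((1 - t) *\<^sub>R x + t *\<^sub>R y)) \<le> (1 - t) * h (g x) + t * h (g y)" .
qed

lemma continuous_on_convex_mono:
  fixes h :: "real \<Rightarrow> real"
  assumes h: "convex_on {0..} h" and hm: "mono_on {0..} h"
  shows "continuous_on {0..} h"
  unfolding continuous_on_eq_continuous_within
proof
  fix x :: real assume x: "x \<in> {0..}"
  show "continuous (at x within {0..}) h"
  proof (cases "x = 0")
    case False
    then have xp: "x \<in> {0<..}" using x by auto
    have "continuous_on {0<..} h"
      by (rule convex_on_continuous) (auto intro: convex_on_subset[OF h])
    then have "isCont h x" using continuous_on_eq_continuous_at[of "{0<..}" h] xp by simp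
    then show ?thesis by (rule continuous_at_imp_continuous_within)
  next
    case True
    have lim: "((\<lambda>t. (1 - t) * h 0 + t * h 1) \<longlongrightarrow> h 0) (at 0 within {0..})"
      by (rule tendsto_eq_intros) (auto intro!: tendsto_eq_intros)
    have "(h \<longlongrightarrow> h 0) (at 0 within {0..})"
    proof (rule tendsto_sandwich[OF _ _ tendsto_const lim])
      have ev: "\<forall>\<^sub>F t in at (0::real) within {0..}. 0 \<le> t \<and> t \<le> 1"
        unfolding eventually_at by (rule exI[of _ 1]) (auto simp: dist_real_def)
      show "\<forall>\<^sub>F t in at 0 within {0..}. h 0 \<le> h t"
        using ev by eventually_elim (use hm in \<open>auto simp: mono_on_def\<close>)
      show "\<forall>\<^sub>F t in at 0 within {0..}. h t \<le> (1 - t) * h 0 + t * h 1"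
        using ev by eventually_elim (use convex_onD[OF h, of _ 0 1] in auto)
    qed
    then show ?thesis using True by (simp add: continuous_within)
  qed
qed

lemma convex_on_supporting_line:
  fixes \<phi> :: "real \<Rightarrow> real"
  assumes c: "convex_on {0..} \<phi>" and s: "s > 0"
  shows "\<exists>c. \<forall>t\<ge>0. \<phi> s + c * (t - s) \<le> \<phi> t"
proof -
  define sl where "sl u = (\<phi> u - \<phi> s) / (u - s)" for u
  define L where "L = sl ` {0..<s}"
  have Lne: "L \<noteq> {}" using s by (auto simp: L_def)
  have three: "sl u \<le> sl v" if "0 \<le> u" "u < s" "s < v" for u v
  proof -
    have a: "(\<phi> u - \<phi> s) / (u - s) \<le> (\<phi> u - \<phi> v) / (u - v)"
      using convex_on_slope_le(1)[OF c, of u v s] that by auto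
    have b: "(\<phi> u - \<phi> v) / (u - v) \<le> (\<phi> s - \<phi> v) / (s - v)"
      using convex_on_slope_le(2)[OF c, of u v s] that by auto
    have "(\<phi> s - \<phi> v) / (s - v) = sl v" by (simp add: sl_def divide_simps) (simp add: algebra_simps)
    then show ?thesis using a b unfolding sl_def by linarith
  qed
  have Lbd: "bdd_above L" unfolding L_def
    by (rule bdd_aboveI[of _ "sl (s + 1)"]) (use three s in auto)
  define c where "c = Sup L"
  show ?thesis
  proof (intro exI[of _ c] allI impI)
    fix t :: real assume t: "0 \<le> t"
    consider "t < s" | "t = s" | "t > s" by linarith
    then show "\<phi> s + c * (t - s) \<le> \<phi> t"
    proof cases
      case 1
      have "sl t \<le> c" unfolding c_def by (rule cSup_upper[OF _ Lbd]) (use t 1 in \<open>auto simp: L_def\<close>)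
      then have "(\<phi> t - \<phi> s) / (t - s) \<le> c" by (simp add: sl_def)
      then have "c * (t - s) \<le> \<phi> t - \<phi> s" using 1 by (simp add: divide_le_eq mult.commute)
      then show ?thesis by simp
    next
      case 2 then show ?thesis by simp
    next
      case 3
      have "c \<le> sl t" unfolding c_def by (rule cSup_least[OF Lne]) (use three 3 in \<open>auto simp: L_def\<close>)
      then have "c \<le> (\<phi> t - \<phi> s) / (t - s)" by (simp add: sl_def)
      then have "c * (t - s) \<le> \<phi> t - \<phi> s" using 3 by (simp add: le_divide_eq)
      then show ?thesis by simp
    qed
  qed
qed

section \<open>Jensen's operator inequality\<close>

lemma jensen_operator_inequality:
  fixes F :: "'a::{complex_inner, complete_space} \<Rightarrow> 'a"
  assumes F: "positive_op F" and \<phi>c: "continuous_on {0..} \<phi>" and cv: "convex_on {0..} \<phi>"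
    and mo: "mono_on {0..} \<phi>" and x: "norm x = 1"
  shows "\<phi> (Re (cinner (F x) x)) \<le> Re (cinner (cfc \<phi> F x) x)"
proof -
  define s where "s = Re (cinner (F x) x)"
  have s0: "0 \<le> s" unfolding s_def by (rule positive_op_nonneg[OF F])
  have \<phi>F: "continuous_on {0..onorm F} \<phi>" using \<phi>c by (rule continuous_on_subset) auto
  show ?thesis
  proof (cases "s = 0")
    case True
    have "Re (cinner (cfc (\<lambda>t. \<phi> 0) F x) x) \<le> Re (cinner (cfc \<phi> F x) x)"
      by (rule cfc_mono[OF F continuous_on_const \<phi>F]) (use mo in \<open>auto simp: mono_on_def\<close>)
    then show ?thesis using True x by (simp add: cfc_const[OF F] cinner_scaleR_left Re_cinner_self s_def)
  next
    case False
    then have sp: "s > 0" using s0 by simp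
    obtain c where c: "\<forall>t\<ge>0. \<phi> s + c * (t - s) \<le> \<phi> t" using convex_on_supporting_line[OF cv sp] by blast
    define u where "u = [:\<phi> s - c * s, c:]"
    have pu: "poly u t = \<phi> s + c * (t - s)" for t by (simp add: u_def algebra_simps)
    have "Re (cinner (cfc (poly u) F x) x) \<le> Re (cinner (cfc \<phi> F x) x)"
      by (rule cfc_mono[OF F continuous_on_poly[OF continuous_on_id] \<phi>F]) (use c in \<open>simp add: pu\<close>)
    moreover have "Re (cinner (cfc (poly u) F x) x) = \<phi> s"
    proof -
      have Fl: "bounded_linear F" by (rule positive_op_bounded_linear[OF F])
      have e: "cfc (poly u) F x = (\<phi> s - c * s) *\<^sub>R x + c *\<^sub>R F x"
        by (simp add: cfc_poly[OF F] u_def poly_op_pCons[OF Fl] bounded_linear_apply_scaleR[OF Fl]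
            bounded_linear_apply_add[OF Fl] bounded_linear_apply_0[OF Fl])
      show ?thesis unfolding e cinner_add_left cinner_scaleR_left
        using x by (simp add: Re_cinner_self s_def[symmetric])
    qed
    ultimately show ?thesis by (simp add: s_def)
  qed
qed

lemma continuous_on_powr_nonneg: "s > 0 \<Longrightarrow> continuous_on {0..} (\<lambda>t::real. t powr s)"
  by (rule continuous_on_powr') (auto intro: continuous_intros)

lemma powr_half_square:
  assumes "0 \<le> (y::real)"
  shows "(y\<^sup>2) powr (s / 2) = y powr s"
proof (cases "y = 0")
  case False
  then have "y\<^sup>2 = y powr 2" using assms by (simp add: powr_realpow)
  then show ?thesis by (simp add: powr_powr)
qed simp

lemma mono_on_compose_powr:
  fixes h :: "real \<Rightarrow> real"
  assumes "mono_on {0..} h" and "c > 0"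
  shows "mono_on {0..} (\<lambda>t. h (t powr c))"
proof (rule mono_onI)
  fix a b :: real assume "a \<in> {0..}" "b \<in> {0..}" "a \<le> b"
  then show "h (a powr c) \<le> h (b powr c)"
    using assms by (intro mono_onD[OF assms(1)]) (auto intro: powr_mono2)
qed

lemma h_powr_le_Young_convex:
  fixes h :: "real \<Rightarrow> real"
  assumes h_mono: "mono_on {0..} h" and h_convex: "convex_on {0..} h"
    and p: "p > 1" and q: "q > 1" and pq: "1 / p + 1 / q = 1" and r: "r > 0"
    and a: "0 \<le> a" and b: "0 \<le> b" and w: "0 \<le> w" and wab: "w\<^sup>2 \<le> a * b"
  shows "h (w powr r) \<le> (1 / p) * h (a powr (p * r / 2)) + (1 / q) * h (b powr (q * r / 2))"
proof -
  define \<alpha> where "\<alpha> = a powr (p * r / 2)"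
  define \<beta> where "\<beta> = b powr (q * r / 2)"
  have \<alpha>\<beta>: "0 \<le> \<alpha>" "0 \<le> \<beta>" by (simp_all add: \<alpha>_def \<beta>_def)
  have "w powr r = (w\<^sup>2) powr (r / 2)" using powr_half_square[OF w, of r] by simp
  also have "\<dots> \<le> (a * b) powr (r / 2)" by (rule powr_mono2) (use r wab in auto)
  also have "\<dots> = a powr (r / 2) * b powr (r / 2)" using a b by (simp add: powr_mult)
  also have "\<dots> \<le> (a powr (r / 2)) powr p / p + (b powr (r / 2)) powr q / q"
    by (rule Youngs_inequality[OF p q pq]) simp_all
  also have "\<dots> = (1 / p) * \<alpha> + (1 / q) * \<beta>"
    by (simp add: \<alpha>_def \<beta>_def powr_powr mult.commute)
  finally have "h (w powr r) \<le> h ((1 / p) * \<alpha> + (1 / q) * \<beta>)"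
    using \<alpha>\<beta> p q by (intro mono_onD[OF h_mono]) auto
  also have "\<dots> \<le> (1 / p) * h \<alpha> + (1 / q) * h \<beta>"
    using convex_onD[OF h_convex, of "1 / q" \<alpha> \<beta>] \<alpha>\<beta> q
    by (simp add: \<open>1 / p + 1 / q = 1\<close>[THEN eq_diff_eq[THEN iffD2], symmetric])
  finally show ?thesis by (simp add: \<alpha>_def \<beta>_def)
qed

lemma continuous_on_compose_sqrt_powr:
  fixes h f :: "real \<Rightarrow> real" and s :: real
  assumes h: "continuous_on {0..} h" and f: "continuous_on {0..} f"
    and fnn: "\<And>t. 0 \<le> t \<Longrightarrow> 0 \<le> f t" and s: "s > 0"
  shows "continuous_on {0..} (\<lambda>t. h (f (sqrt t) powr s))"
  by (rule continuous_on_compose2[OF h continuous_on_compose2[OF continuous_on_powr_nonneg[OF s]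
        continuous_on_compose2[OF f]]]) (auto intro: continuous_intros simp: fnn)

lemma cfc_fpow_abs:
  fixes X :: "'a::{complex_inner, complete_space} \<Rightarrow> 'a"
  assumes X: "bounded_clinear X" and f: "continuous_on {0..} f" and fnn: "\<And>t. 0 \<le> t \<Longrightarrow> 0 \<le> f t"
    and s: "s > 0" and h: "continuous_on {0..} h"
  shows "cfc h (fpow_abs f s X) = cfc (\<lambda>t. h (f (sqrt t) powr s)) (adj X \<circ> X)"
proof -
  let ?S = "adj X \<circ> X"
  have S: "positive_op ?S" by (rule positive_op_adj_comp[OF X])
  have fsq: "continuous_on {0..onorm ?S} (\<lambda>t. f (sqrt t))"
    by (rule continuous_on_compose2[OF f]) (auto intro: continuous_intros)
  have fps: "continuous_on {0..onorm ?S} (\<lambda>t. f (sqrt t) powr s)"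
    by (rule continuous_on_compose2[OF continuous_on_powr_nonneg[OF s] fsq]) (auto simp: fnn)
  have "cfc f (cfc sqrt ?S) = cfc (\<lambda>t. f (sqrt t)) ?S"
    by (rule ext, rule cfc_comp[OF S _ _ f]) (auto intro: continuous_intros)
  moreover have "cfc (\<lambda>t. t powr s) (cfc (\<lambda>t. f (sqrt t)) ?S) = cfc (\<lambda>t. f (sqrt t) powr s) ?S"
    by (rule ext, rule cfc_comp[OF S fsq _ continuous_on_powr_nonneg[OF s]]) (simp add: fnn)
  moreover have "cfc h (cfc (\<lambda>t. f (sqrt t) powr s) ?S) = cfc (\<lambda>t. h (f (sqrt t) powr s)) ?S"
    by (rule ext, rule cfc_comp[OF S fps _ h]) simp
  ultimately show ?thesis by (simp add: fpow_abs_def absop_def)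
qed

lemma jensen_fpow:
  fixes S :: "'a::{complex_inner, complete_space} \<Rightarrow> 'a"
  assumes S: "positive_op S" and f: "continuous_on {0..} f" and fnn: "\<And>t. 0 \<le> t \<Longrightarrow> 0 \<le> f t"
    and s: "s \<ge> 2" and h: "continuous_on {0..} h" and hm: "mono_on {0..} h"
    and hc: "convex_on {0..} h" and x: "norm x = 1"
  shows "h ((Re (cinner (cfc (\<lambda>t. (f (sqrt t))\<^sup>2) S x) x)) powr (s / 2))
     \<le> Re (cinner (cfc (\<lambda>t. h (f (sqrt t) powr s)) S x) x)"
proof -
  let ?m = "\<lambda>t. (f (sqrt t))\<^sup>2"
  let ?\<phi> = "\<lambda>t. h (t powr (s / 2))"
  have s2: "s / 2 > 0" "s / 2 \<ge> 1" using s by auto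
  have mc: "continuous_on {0..onorm S} ?m"
    by (intro continuous_intros, rule continuous_on_compose2[OF f]) (auto intro: continuous_intros)
  have \<phi>c: "continuous_on {0..} ?\<phi>"
    by (rule continuous_on_compose2[OF h continuous_on_powr_nonneg[OF s2(1)]]) auto
  have "?\<phi> (Re (cinner (cfc ?m S x) x)) \<le> Re (cinner (cfc ?\<phi> (cfc ?m S) x) x)"
    by (rule jensen_operator_inequality[OF positive_op_cfc[OF S mc] \<phi>c
          convex_on_mono_compose[OF hc hm convex_on_powr_nonneg[OF s2(2)]]
          mono_on_compose_powr[OF hm s2(1)] x]) simp_all
  also have "cfc ?\<phi> (cfc ?m S) x = cfc (\<lambda>t. ?\<phi> (?m t)) S x"
    by (rule cfc_comp[OF S mc _ \<phi>c]) simp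
  also have "cfc (\<lambda>t. ?\<phi> (?m t)) S = cfc (\<lambda>t. h (f (sqrt t) powr s)) S"
    by (rule cfc_cong[OF S]) (simp add: powr_half_square fnn)
  finally show ?thesis .
qed

lemma h_cinner_powr_le_onorm:
  fixes A :: "'a::{complex_inner, complete_space} \<Rightarrow> 'a" and f g h :: "real \<Rightarrow> real"
  assumes A: "bounded_clinear A"
    and f: "continuous_on {0..} f" and g: "continuous_on {0..} g"
    and fnn: "\<And>t. 0 \<le> t \<Longrightarrow> 0 \<le> f t" and gnn: "\<And>t. 0 \<le> t \<Longrightarrow> 0 \<le> g t"
    and fg: "\<And>t. 0 \<le> t \<Longrightarrow> f t * g t = t"
    and p: "p > 1" and q: "q > 1" and pq: "1 / p + 1 / q = 1"
    and r: "r > 0" and rpq: "r * min p q \<ge> 2"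
    and h_mono: "mono_on {0..} h" and h_convex: "convex_on {0..} h" and x: "norm x = 1"
  shows "h ((cmod (cinner (A x) x)) powr r)
    \<le> onorm (\<lambda>x. (1 / p) *\<^sub>R cfc h (fpow_abs f (p * r) A) x
                 + (1 / q) *\<^sub>R cfc h (fpow_abs g (q * r) (adj A)) x)"
proof -
  let ?S = "adj A \<circ> A" and ?T = "A \<circ> adj A"
  have S: "positive_op ?S" by (rule positive_op_adj_comp[OF A])
  have T: "positive_op ?T" by (rule positive_op_comp_adj[OF A])
  have hc: "continuous_on {0..} h" by (rule continuous_on_convex_mono[OF h_convex h_mono])
  have "r * min p q \<le> r * p" "r * min p q \<le> r * q" using r by (auto intro: mult_left_mono)
  then have pr: "p * r \<ge> 2" "q * r \<ge> 2" using rpq by (auto simp: mult.commute)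
  define F where "F = cfc (\<lambda>t. h (f (sqrt t) powr (p * r))) ?S"
  define G where "G = cfc (\<lambda>t. h (g (sqrt t) powr (q * r))) ?T"
  have F_eq: "cfc h (fpow_abs f (p * r) A) = F"
    unfolding F_def using cfc_fpow_abs[OF A f fnn _ hc] pr by simp
  have G_eq: "cfc h (fpow_abs g (q * r) (adj A)) = G"
    unfolding G_def using cfc_fpow_abs[OF bounded_clinear_adj[OF A] g gnn _ hc] pr
    by (simp add: adj_adj[OF A])
  have F: "bounded_linear F" unfolding F_def using pr
    by (intro bounded_linear_cfc[OF S] continuous_on_subset[OF continuous_on_compose_sqrt_powr[OF hc f fnn]])
       auto
  have G: "bounded_linear G" unfolding G_def using pr
    by (intro bounded_linear_cfc[OF T] continuous_on_subset[OF continuous_on_compose_sqrt_powr[OF hc g gnn]])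
       auto
  define a where "a = Re (cinner (cfc (\<lambda>t. (f (sqrt t))\<^sup>2) ?S x) x)"
  define b where "b = Re (cinner (cfc (\<lambda>t. (g (sqrt t))\<^sup>2) ?T x) x)"
  have cont_sq: "continuous_on {0..} (\<lambda>t. (u (sqrt t))\<^sup>2)"
    if "continuous_on {0..} u" for u :: "real \<Rightarrow> real"
    by (intro continuous_intros, rule continuous_on_compose2[OF that]) (auto intro: continuous_intros)
  have "(cmod (cinner (A x) x))\<^sup>2 \<le> a * b"
    unfolding a_def b_def
    by (rule mixed_schwarz[OF A cont_sq[OF f] cont_sq[OF g]])
       (simp_all add: fg power_mult_distrib[symmetric])
  moreover have "0 \<le> a" "0 \<le> b" unfolding a_def b_def
    by (intro cfc_Re_nonneg[OF S] cfc_Re_nonneg[OF T] continuous_on_subset[OF cont_sq]; simp add: f g)+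
  ultimately have "h ((cmod (cinner (A x) x)) powr r)
      \<le> (1 / p) * h (a powr (p * r / 2)) + (1 / q) * h (b powr (q * r / 2))"
    by (intro h_powr_le_Young_convex[OF h_mono h_convex p q pq r]) auto
  also have "\<dots> \<le> (1 / p) * Re (cinner (F x) x) + (1 / q) * Re (cinner (G x) x)"
    using jensen_fpow[OF S f fnn pr(1) hc h_mono h_convex x]
      jensen_fpow[OF T g gnn pr(2) hc h_mono h_convex x]
      p q unfolding a_def b_def F_def G_def by (intro add_mono mult_left_mono) auto
  also have "\<dots> = Re (cinner ((1 / p) *\<^sub>R F x + (1 / q) *\<^sub>R G x) x)"
    by (simp add: cinner_add_left cinner_scaleR_left)
  also have "\<dots> \<le> onorm (\<lambda>x. (1 / p) *\<^sub>R F x + (1 / q) *\<^sub>R G x)"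
  proof -
    have "bounded_linear (\<lambda>x. (1 / p) *\<^sub>R F x + (1 / q) *\<^sub>R G x)"
      by (intro bounded_linear_add bounded_linear_compose[OF bounded_linear_scaleR_right] F G)
    from onorm[OF this, of x] show ?thesis
      using Re_cinner_le[of "(1 / p) *\<^sub>R F x + (1 / q) *\<^sub>R G x" x] x by simp
  qed
  finally show ?thesis unfolding F_eq G_eq .
qed

lemma cmod_cinner_unit_le_onorm: "bounded_clinear X \<Longrightarrow> norm x = 1 \<Longrightarrow> cmod (cinner (X x) x) \<le> onorm X"
  using cmod_cinner_op_le[of X x] by simp

lemma numerical_radius_upper:
  assumes bound: "\<And>x. norm x = 1 \<Longrightarrow> cmod (cinner (X x) x) \<le> c" and x: "norm x = 1"
  shows "cmod (cinner (X x) x) \<le> numerical_radius X"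
  unfolding numerical_radius_def
  by (rule cSup_upper) (use bound x in \<open>auto intro!: bdd_aboveI[of _ c]\<close>)

lemma numerical_radius_least:
  fixes X :: "'a::complex_inner \<Rightarrow> 'a"
  assumes nontriv: "\<exists>x::'a. x \<noteq> 0" and bound: "\<And>x. norm x = 1 \<Longrightarrow> cmod (cinner (X x) x) \<le> c"
  shows "numerical_radius X \<le> c"
proof -
  obtain u :: 'a where "u \<noteq> 0" using nontriv by blast
  then have "norm ((1 / norm u) *\<^sub>R u) = 1" by simp
  then have "{cmod (cinner (X x) x) |x. norm x = 1} \<noteq> {}" by blast
  then show ?thesis unfolding numerical_radius_def by (rule cSup_least) (use bound in auto)
qed

lemma cmod_cinner_le_numerical_radius:
  assumes X: "bounded_clinear X"
  shows "cmod (cinner (X x) x) \<le> numerical_radius X * (norm x)\<^sup>2"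
proof (cases "x = 0")
  case False
  let ?y = "(1 / norm x) *\<^sub>R x"
  have "cinner (X ?y) ?y = of_real ((1 / norm x)\<^sup>2) * cinner (X x) x"
    by (simp add: bounded_linear_apply_scaleR[OF bounded_clinear_imp_bounded_linear[OF X]]
        cinner_scaleR_left cinner_scaleR_right power2_eq_square)
  moreover have "cmod (cinner (X ?y) ?y) \<le> numerical_radius X"
    by (rule numerical_radius_upper[OF cmod_cinner_unit_le_onorm[OF X]]) (use False in auto)
  ultimately have "cmod (cinner (X ?y) ?y) = cmod (cinner (X x) x) / (norm x)\<^sup>2"
    "cmod (cinner (X x) x) / (norm x)\<^sup>2 \<le> numerical_radius X"
    using False by (simp_all add: norm_mult norm_divide power2_eq_square)
  then show ?thesis using False by (simp add: divide_le_eq)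
qed simp

lemma numerical_radius_diag_op:
  fixes A D :: "'a::complex_inner \<Rightarrow> 'a"
  assumes nontriv: "\<exists>x::'a. x \<noteq> 0" and A: "bounded_clinear A" and D: "bounded_clinear D"
  shows "numerical_radius (diag_op A D) = max (numerical_radius A) (numerical_radius D)"
proof -
  let ?M = "max (numerical_radius A) (numerical_radius D)"
  have diag: "cmod (cinner (diag_op A D z) z) \<le> ?M" if "norm z = 1" for z
  proof -
    obtain x y where z: "z = (x, y)" by fastforce
    have "cmod (cinner (diag_op A D z) z) \<le> cmod (cinner (A x) x) + cmod (cinner (D y) y)"
      by (simp add: z diag_op_def cinner_prod_def norm_triangle_ineq)
    also have "\<dots> \<le> numerical_radius A * (norm x)\<^sup>2 + numerical_radius D * (norm y)\<^sup>2"
      by (intro add_mono cmod_cinner_le_numerical_radius A D)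
    also have "\<dots> \<le> ?M * (norm x)\<^sup>2 + ?M * (norm y)\<^sup>2"
      by (intro add_mono mult_right_mono) auto
    also have "\<dots> = ?M" using that by (simp add: z norm_prod_def distrib_left[symmetric])
    finally show ?thesis .
  qed
  have "cmod (cinner (A x) x) \<le> numerical_radius (diag_op A D)"
    "cmod (cinner (D x) x) \<le> numerical_radius (diag_op A D)" if "norm x = 1" for x
    using numerical_radius_upper[OF diag, of "(x, 0)"] numerical_radius_upper[OF diag, of "(0, x)"] that
    by (simp_all add: diag_op_def cinner_prod_def norm_prod_def)
  then have "?M \<le> numerical_radius (diag_op A D)"
    by (simp add: numerical_radius_least[OF nontriv])
  moreover obtain u :: 'a where "u \<noteq> 0" using nontriv by blast
  then have "numerical_radius (diag_op A D) \<le> ?M"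
    by (intro numerical_radius_least[OF exI[of _ "(u, 0)"] diag]) (auto simp: zero_prod_def)
  ultimately show ?thesis by (intro antisym) simp_all
qed

lemma mono_continuous_on_Sup_le:
  fixes \<phi> :: "real \<Rightarrow> real"
  assumes mono: "mono_on {0..} \<phi>" and cont: "continuous_on {0..} \<phi>"
    and S: "S \<noteq> {}" "bdd_above S" "S \<subseteq> {0..}" and le: "\<And>s. s \<in> S \<Longrightarrow> \<phi> s \<le> c"
  shows "\<phi> (Sup S) \<le> c"
proof -
  define \<psi> where "\<psi> t = \<phi> (max t 0)" for t
  have "mono \<psi>"
  proof (rule monoI)
    fix a b :: real assume "a \<le> b"
    then show "\<psi> a \<le> \<psi> b" unfolding \<psi>_def by (intro mono_onD[OF mono]) auto
  qed
  moreover have "continuous_on UNIV \<psi>"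
    unfolding \<psi>_def by (rule continuous_on_compose2[OF cont]) (auto intro: continuous_intros)
  ultimately have "\<psi> (Sup S) = Sup (\<psi> ` S)"
    using continuous_at_Sup_mono[of \<psi> S] S(1,2)
    by (simp add: continuous_on_eq_continuous_at continuous_at_imp_continuous_within)
  also have "\<dots> \<le> c"
    using S le by (intro cSUP_least) (auto simp: \<psi>_def subset_eq)
  finally have "\<psi> (Sup S) \<le> c" .
  moreover have "0 \<le> Sup S"
    using S cSup_upper[of _ S] by (meson atLeast_iff ex_in_conv order_trans subsetD)
  ultimately show ?thesis by (simp add: \<psi>_def)
qed

lemma h_numerical_radius_powr_le:
  fixes X :: "'a::complex_inner \<Rightarrow> 'a" and h :: "real \<Rightarrow> real"
  assumes nontriv: "\<exists>x::'a. x \<noteq> 0" and X: "bounded_clinear X"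
    and h_mono: "mono_on {0..} h" and h_cont: "continuous_on {0..} h" and r: "r > 0"
    and bound: "\<And>x. norm x = 1 \<Longrightarrow> h ((cmod (cinner (X x) x)) powr r) \<le> c"
  shows "h (numerical_radius X powr r) \<le> c"
  unfolding numerical_radius_def
proof (rule mono_continuous_on_Sup_le)
  show "mono_on {0..} (\<lambda>t. h (t powr r))" by (rule mono_on_compose_powr[OF h_mono r])
  show "continuous_on {0..} (\<lambda>t. h (t powr r))"
    by (rule continuous_on_compose2[OF h_cont continuous_on_powr_nonneg[OF r]]) auto
  obtain u :: 'a where "u \<noteq> 0" using nontriv by blast
  then have "norm ((1 / norm u) *\<^sub>R u) = 1" by simp
  then show "{cmod (cinner (X x) x) |x. norm x = 1} \<noteq> {}" by blast
  show "bdd_above {cmod (cinner (X x) x) |x. norm x = 1}"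
    using cmod_cinner_unit_le_onorm[OF X] by (auto intro!: bdd_aboveI[of _ "onorm X"])
  show "{cmod (cinner (X x) x) |x. norm x = 1} \<subseteq> {0..}" by auto
  show "h (s powr r) \<le> c" if "s \<in> {cmod (cinner (X x) x) |x. norm x = 1}" for s
    using bound that by blast
qed

theorem theorem3p8:
  fixes A D :: "'a::{complex_inner, complete_space} \<Rightarrow> 'a"
    and f g h :: "real \<Rightarrow> real"
    and p q r :: real
  assumes nontriv: "\<exists>x::'a. x \<noteq> 0"
    and A: "bounded_clinear A" and D: "bounded_clinear D"
    and f_cont: "continuous_on {0..} f" and g_cont: "continuous_on {0..} g"
    and f_nn: "\<forall>t\<ge>0. f t \<ge> 0" and g_nn: "\<forall>t\<ge>0. g t \<ge> 0"
    and fg: "\<forall>t\<ge>0. f t * g t = t"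
    and p: "p > 1" and q: "q > 1" and pq: "1 / p + 1 / q = 1"
    and r: "r > 0" and rpq: "r * min p q \<ge> 2"
    and h_nn: "\<forall>t\<ge>0. h t \<ge> 0"
    and h_mono: "mono_on {0..} h"
    and h_convex: "convex_on {0..} h"
  shows "h (numerical_radius (diag_op A D) powr r)
    \<le> max (onorm (\<lambda>x. (1 / p) *\<^sub>R cfc h (fpow_abs f (p * r) A) x
                       + (1 / q) *\<^sub>R cfc h (fpow_abs g (q * r) (adj A)) x))
          (onorm (\<lambda>x. (1 / p) *\<^sub>R cfc h (fpow_abs f (p * r) D) x
                       + (1 / q) *\<^sub>R cfc h (fpow_abs g (q * r) (adj D)) x))"
proof -
  have single: "h (numerical_radius X powr r) \<le> onorm (\<lambda>x. (1 / p) *\<^sub>R cfc h (fpow_abs f (p * r) X) x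
      + (1 / q) *\<^sub>R cfc h (fpow_abs g (q * r) (adj X)) x)" if X: "bounded_clinear X" for X :: "'a \<Rightarrow> 'a"
    using f_nn g_nn fg
    by (intro h_numerical_radius_powr_le[OF nontriv X h_mono continuous_on_convex_mono[OF h_convex h_mono] r]
        h_cinner_powr_le_onorm[OF X f_cont g_cont _ _ _ p q pq r rpq h_mono h_convex]) auto
  show ?thesis
    unfolding numerical_radius_diag_op[OF nontriv A D] max_def
    using single[OF A] single[OF D] by auto
qed

end
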